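(* Let $k$ be a field and let $\mathcal C$ be a conilpotent coalgebra over $k$ such that the $k$-vector space $H^1(\mathcal C)$ is finite-dimensional. Then the forgetful functor from the category of left $\mathcal C$-contramodules to the category of left $\mathcal C^\vee$-modules, $\mathcal C\text{-contra}\to\mathcal C^\vee\text{-mod}$, is fully faithful. Moreover, for any dense subring $R$ of the topological ring $\mathcal C^\vee$, the forgetful functor $\mathcal C\text{-contra}\to R\text{-mod}$ is fully faithful.
   Context: A coalgebra $\mathcal C$ over $k$ is a vector space with coassociative comultiplication $\mu:\mathcal C\to\mathcal C\otimes_k\mathcal C$, $c\mapsto\sum c_{(1)}\otimes c_{(2)}$, and counit $\varepsilon:\mathcal C\to k$. It is coaugmented if endowed with a coalgebra morphism $\gamma:k\to\mathcal C$; then $\mathcal C_+=\mathcal C/\gamma(k)$ is a coalgebra without counit, and $\mathcal C$ is called conilpotent if for every $x\in\mathcal C_+$ some iterated comultiplication $\mathcal C_+\to\mathcal C_+^{\otimes m+1}$ annihilates $x$ (such a coaugmentation is then unique). One sets $H^1(\mathcal C)=\ker(\mathcal C_+\to\mathcal C_+\otimes_k\mathcal C_+)$ (the kernel of the induced comultiplication). A left $\mathcal C$-contramodule is a $k$-vector space $P$ with a linear map $\pi_P:\mathrm{Hom}_k(\mathcal C,P)\to P$ such that (contraassociativity) the two maps $\mathrm{Hom}_k(\mathcal C,\mathrm{Hom}_k(\mathcal C,P))\cong\mathrm{Hom}_k(\mathcal C\otimes_k\mathcal C,P)\rightrightarrows\mathrm{Hom}_k(\mathcal C,P)$, one induced by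 $\mu$ and the other by $\pi_P$, have equal compositions with $\pi_P$ (here $\mathrm{Hom}_k(V,\mathrm{Hom}_k(U,W))\cong\mathrm{Hom}_k(U\otimes_k V,W)$ is used), and (contraunitality) the composition $P\to\mathrm{Hom}_k(\mathcal C,P)\to P$ of the map induced by $\varepsilon$ with $\pi_P$ is the identity; morphisms are linear maps commuting with the contraactions. The dual vector space $\mathcal C^\vee=\mathrm{Hom}_k(\mathcal C,k)$ is an associative algebra with multiplication $(\phi\psi)(c)=\sum\psi(c_{(1)})\phi(c_{(2)})$, and every left $\mathcal C$-contramodule $P$ is a left $\mathcal C^\vee$-module via $\phi\cdot p=\pi_P(c\mapsto\phi(c)p)$; this defines the forgetful functor. $\mathcal C^\vee$ carries the (pseudo-compact) topology in which the annihilators of finite-dimensional subspaces of $\mathcal C$ form a base of neighborhoods of zero; a dense subring $R$ is a subring (containing the unit) dense in this topology, and $R$-modules structures on contramodules are obtained by restriction. *)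

theory Defs
  imports Main "HOL.Vector_Spaces"
begin

text \<open>A k-vector space
is a type with an additive group structure and a scalar multiplication s for
which vector_space s holds (HOL.Vector_Spaces).  k-linear maps are linear s1 s2 f.
Hom_k(V,W) is represented by the HOL functions V => W which are linear.

Tensor products are not available in the library; an element of C (x) C is
represented by a finite list of pairs (Sweedler notation), and two such
representatives are equal in C (x) C iff all k-valued bilinear forms agree on
them (bilinear forms separate points of a tensor product of vector spaces).
Similarly for higher tensor powers (lists of lists) with multilinear forms.\<close>

definition bilinear_form :: "('k::field \<Rightarrow> 'c::ab_group_add \<Rightarrow> 'c) \<Rightarrow> ('c \<Rightarrow> 'c \<Rightarrow> 'k) \<Rightarrow> bool" where
  "bilinear_form sC b \<longleftrightarrow>
     (\<forall>y. Vector_Spaces.linear sC (*) (\<lambda>x. b x y)) \<and> (\<forall>x. Vector_Spaces.linear sC (*) (\<lambda>y. b x y))"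

definition trilinear_form :: "('k::field \<Rightarrow> 'c::ab_group_add \<Rightarrow> 'c) \<Rightarrow> ('c \<Rightarrow> 'c \<Rightarrow> 'c \<Rightarrow> 'k) \<Rightarrow> bool" where
  "trilinear_form sC t \<longleftrightarrow>
     (\<forall>y z. Vector_Spaces.linear sC (*) (\<lambda>x. t x y z)) \<and> (\<forall>x z. Vector_Spaces.linear sC (*) (\<lambda>y. t x y z))
     \<and> (\<forall>x y. Vector_Spaces.linear sC (*) (\<lambda>z. t x y z))"

definition multilinear_form :: "('k::field \<Rightarrow> 'c::ab_group_add \<Rightarrow> 'c) \<Rightarrow> nat \<Rightarrow> ('c list \<Rightarrow> 'k) \<Rightarrow> bool" where
  "multilinear_form sC n phi \<longleftrightarrow>
     (\<forall>xs i. length xs = n \<and> i < n \<longrightarrow> Vector_Spaces.linear sC (*) (\<lambda>x. phi (xs[i := x])))"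

definition sw :: "('c \<Rightarrow> 'c \<Rightarrow> 'v::comm_monoid_add) \<Rightarrow> ('c \<times> 'c) list \<Rightarrow> 'v" where
  "sw b t = sum_list (map (\<lambda>(x, y). b x y) t)"

definition coalgebra ::
  "('k::field \<Rightarrow> 'c::ab_group_add \<Rightarrow> 'c) \<Rightarrow> ('c \<Rightarrow> ('c \<times> 'c) list) \<Rightarrow> ('c \<Rightarrow> 'k) \<Rightarrow> bool" where
  "coalgebra sC mu eps \<longleftrightarrow>
     vector_space sC \<and> Vector_Spaces.linear sC (*) eps \<and>
     (\<forall>b. bilinear_form sC b \<longrightarrow> Vector_Spaces.linear sC (*) (\<lambda>c. sw b (mu c))) \<and>
     (\<forall>t c. trilinear_form sC t \<longrightarrow>
        sw (\<lambda>a b. sw (\<lambda>x y. t x y b) (mu a)) (mu c)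
      = sw (\<lambda>a b. sw (\<lambda>x y. t a x y) (mu b)) (mu c)) \<and>
     (\<forall>c. sw (\<lambda>a b. sC (eps a) b) (mu c) = c) \<and>
     (\<forall>c. sw (\<lambda>a b. sC (eps b) a) (mu c) = c)"

text \<open>A coaugmentation gamma : k -> C is a coalgebra morphism; it is determined by
g = gamma(1), which must be grouplike: mu(g) = g (x) g and eps(g) = 1.\<close>
definition coaugmentation ::
  "('k::field \<Rightarrow> 'c::ab_group_add \<Rightarrow> 'c) \<Rightarrow> ('c \<Rightarrow> ('c \<times> 'c) list) \<Rightarrow> ('c \<Rightarrow> 'k) \<Rightarrow> 'c \<Rightarrow> bool" where
  "coaugmentation sC mu eps g \<longleftrightarrow>
     eps g = 1 \<and> (\<forall>b. bilinear_form sC b \<longrightarrow> sw b (mu g) = b g g)"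

fun iter_comult :: "('c \<Rightarrow> ('c \<times> 'c) list) \<Rightarrow> nat \<Rightarrow> 'c \<Rightarrow> 'c list list" where
  "iter_comult mu 0 c = [[c]]"
| "iter_comult mu (Suc m) c =
     concat (map (\<lambda>(a, b). map (\<lambda>l. a # l) (iter_comult mu m b)) (mu c))"

text \<open>The image of x + gamma(k) in C_+ is annihilated by the m-fold iterated
(induced) comultiplication C_+ -> C_+^{(x) m+1}: the image of the iterated
comultiplication of x in C_+^{(x) m+1} is zero, i.e. every (m+1)-linear form on C
vanishing as soon as one argument lies in gamma(k) = k g vanishes on it.\<close>
definition plus_annihilated ::
  "('k::field \<Rightarrow> 'c::ab_group_add \<Rightarrow> 'c) \<Rightarrow> ('c \<Rightarrow> ('c \<times> 'c) list) \<Rightarrow> 'c \<Rightarrow> nat \<Rightarrow> 'c \<Rightarrow> bool" where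
  "plus_annihilated sC mu g m x \<longleftrightarrow>
     (\<forall>phi. multilinear_form sC (Suc m) phi \<and>
        (\<forall>xs i t. length xs = Suc m \<and> i < Suc m \<and> xs ! i = sC t g \<longrightarrow> phi xs = 0)
      \<longrightarrow> sum_list (map phi (iter_comult mu m x)) = 0)"

definition conilpotent_wrt ::
  "('k::field \<Rightarrow> 'c::ab_group_add \<Rightarrow> 'c) \<Rightarrow> ('c \<Rightarrow> ('c \<times> 'c) list) \<Rightarrow> ('c \<Rightarrow> 'k) \<Rightarrow> 'c \<Rightarrow> bool" where
  "conilpotent_wrt sC mu eps g \<longleftrightarrow>
     coaugmentation sC mu eps g \<and> (\<forall>x. \<exists>m. plus_annihilated sC mu g m x)"

text \<open>H^1(C) = ker(C_+ -> C_+ (x) C_+) is finite-dimensional: it is spanned by the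
images in C_+ = C / k g of finitely many elements.\<close>
definition H1_finite_dim ::
  "('k::field \<Rightarrow> 'c::ab_group_add \<Rightarrow> 'c) \<Rightarrow> ('c \<Rightarrow> ('c \<times> 'c) list) \<Rightarrow> 'c \<Rightarrow> bool" where
  "H1_finite_dim sC mu g \<longleftrightarrow>
     (\<exists>S. finite S \<and> (\<forall>x. plus_annihilated sC mu g 1 x \<longrightarrow> x \<in> module.span sC (insert g S)))"

text \<open>Left C-contramodule (P, pi).  pi : Hom_k(C,P) -> P is k-linear; an element
g of Hom_k(C, Hom_k(C,P)) is a function g with g v linear for each v and
v |-> g v linear; under Hom(V,Hom(U,W)) = Hom(U (x) V, W) it corresponds to
u (x) v |-> g v u, so the map induced by mu sends g to c |-> sum g c_(2) c_(1).\<close>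
definition contramodule ::
  "('k::field \<Rightarrow> 'c::ab_group_add \<Rightarrow> 'c) \<Rightarrow> ('c \<Rightarrow> ('c \<times> 'c) list) \<Rightarrow> ('c \<Rightarrow> 'k)
   \<Rightarrow> ('k \<Rightarrow> 'p::ab_group_add \<Rightarrow> 'p) \<Rightarrow> (('c \<Rightarrow> 'p) \<Rightarrow> 'p) \<Rightarrow> bool" where
  "contramodule sC mu eps sP pi \<longleftrightarrow>
     vector_space sP \<and>
     (\<forall>h1 h2. Vector_Spaces.linear sC sP h1 \<and> Vector_Spaces.linear sC sP h2 \<longrightarrow> pi (\<lambda>c. h1 c + h2 c) = pi h1 + pi h2) \<and>
     (\<forall>h a. Vector_Spaces.linear sC sP h \<longrightarrow> pi (\<lambda>c. sP a (h c)) = sP a (pi h)) \<and>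
     (\<forall>gg. (\<forall>v. Vector_Spaces.linear sC sP (gg v)) \<and> (\<forall>u. Vector_Spaces.linear sC sP (\<lambda>v. gg v u)) \<longrightarrow>
        pi (\<lambda>c. sw (\<lambda>a b. gg b a) (mu c)) = pi (\<lambda>c. pi (gg c))) \<and>
     (\<forall>p. pi (\<lambda>c. sP (eps c) p) = p)"

definition contra_hom ::
  "('k::field \<Rightarrow> 'c::ab_group_add \<Rightarrow> 'c) \<Rightarrow> ('k \<Rightarrow> 'p::ab_group_add \<Rightarrow> 'p) \<Rightarrow> (('c \<Rightarrow> 'p) \<Rightarrow> 'p)
   \<Rightarrow> ('k \<Rightarrow> 'q::ab_group_add \<Rightarrow> 'q) \<Rightarrow> (('c \<Rightarrow> 'q) \<Rightarrow> 'q) \<Rightarrow> ('p \<Rightarrow> 'q) \<Rightarrow> bool" where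
  "contra_hom sC sP piP sQ piQ f \<longleftrightarrow>
     Vector_Spaces.linear sP sQ f \<and> (\<forall>h. Vector_Spaces.linear sC sP h \<longrightarrow> f (piP h) = piQ (f \<circ> h))"

text \<open>The dual algebra C^vee: linear functionals, (phi psi)(c) = sum psi(c_(1)) phi(c_(2)).\<close>
definition dual :: "('k::field \<Rightarrow> 'c::ab_group_add \<Rightarrow> 'c) \<Rightarrow> ('c \<Rightarrow> 'k) set" where
  "dual sC = {phi. Vector_Spaces.linear sC (*) phi}"

definition dual_mult :: "('c \<Rightarrow> ('c \<times> 'c) list) \<Rightarrow> ('c \<Rightarrow> 'k::field) \<Rightarrow> ('c \<Rightarrow> 'k) \<Rightarrow> 'c \<Rightarrow> 'k" where
  "dual_mult mu phi psi = (\<lambda>c. sw (\<lambda>a b. psi a * phi b) (mu c))"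

definition contra_act :: "('k \<Rightarrow> 'p \<Rightarrow> 'p) \<Rightarrow> (('c \<Rightarrow> 'p) \<Rightarrow> 'p) \<Rightarrow> ('c \<Rightarrow> 'k) \<Rightarrow> 'p \<Rightarrow> 'p" where
  "contra_act sP pi phi p = pi (\<lambda>c. sP (phi c) p)"

text \<open>Dense subring R of C^vee (unit of C^vee is eps); the topology has the
annihilators of finite-dimensional subspaces span B (B finite) as a base of
neighbourhoods of zero.\<close>
definition dense_subring ::
  "('k::field \<Rightarrow> 'c::ab_group_add \<Rightarrow> 'c) \<Rightarrow> ('c \<Rightarrow> ('c \<times> 'c) list) \<Rightarrow> ('c \<Rightarrow> 'k) \<Rightarrow> ('c \<Rightarrow> 'k) set \<Rightarrow> bool" where
  "dense_subring sC mu eps R \<longleftrightarrow>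
     R \<subseteq> dual sC \<and> eps \<in> R \<and>
     (\<forall>r\<in>R. \<forall>s\<in>R. (\<lambda>c. r c - s c) \<in> R \<and> dual_mult mu r s \<in> R) \<and>
     (\<forall>phi\<in>dual sC. \<forall>B. finite B \<longrightarrow>
        (\<exists>r\<in>R. \<forall>x\<in>module.span sC B. r x = phi x))"

definition R_module_hom ::
  "('c \<Rightarrow> 'k) set \<Rightarrow> ('k \<Rightarrow> 'p::ab_group_add \<Rightarrow> 'p) \<Rightarrow> (('c \<Rightarrow> 'p) \<Rightarrow> 'p)
   \<Rightarrow> ('k \<Rightarrow> 'q::ab_group_add \<Rightarrow> 'q) \<Rightarrow> (('c \<Rightarrow> 'q) \<Rightarrow> 'q) \<Rightarrow> ('p \<Rightarrow> 'q) \<Rightarrow> bool" where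
  "R_module_hom R sP piP sQ piQ f \<longleftrightarrow>
     (\<forall>p p'. f (p + p') = f p + f p') \<and>
     (\<forall>r\<in>R. \<forall>p. f (contra_act sP piP r p) = contra_act sQ piQ r (f p))"

end

theory Submission
  imports Defs "HOL-Library.Function_Algebras"
begin

text \<open>
Choose a basis \<open>{g} \<union> gens\<close> of a finite-dimensional subspace containing \<open>g\<close> and
\<open>H\<^sup>1(C)\<close>, and linear functionals \<open>x\<^sub>j\<close> (\<open>j \<in> gens\<close>) from the dense subring \<open>R\<close> that
restrict to the corresponding coordinate functionals there. By induction on the
conilpotency degree, the right actions \<open>c \<mapsto> \<Sum> x\<^sub>j(c\<^sub>2) c\<^sub>1\<close> have common kernel \<open>k g\<close>.
Hence every linear map \<open>h : C \<rightarrow> V\<close> with \<open>h g = 0\<close> has the form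
\<open>h c = \<Sum>\<^sub>j \<Sum> x\<^sub>j(c\<^sub>2) h\<^sub>j(c\<^sub>1)\<close>: the \<open>x\<^sub>j\<close> generate the augmentation ideals of \<open>C\<^sup>\<or>\<close> and
of \<open>Hom(C, V)\<close>.

Contramodules satisfy a Nakayama lemma: if elements \<open>D \<xi>\<close> of a contramodule satisfy
\<open>D \<xi> = \<Sum>\<^sub>j x\<^sub>j \<cdot> D \<eta>\<^sub>j\<close> for all \<open>\<xi>\<close>, then \<open>D = 0\<close>. Iterating yields elements \<open>q\<^sub>w\<close>
indexed by words \<open>w\<close> in the \<open>x\<^sub>j\<close>; by conilpotency the infinite sum \<open>\<Sum>\<^sub>w x\<^sub>w q\<^sub>w\<close> is a
contraaction, and contraassociativity telescopes it to the element of the empty word,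
which therefore vanishes.

If \<open>f\<close> is additive and \<open>R\<close>-linear, write \<open>\<xi> \<in> C\<^sup>\<or>\<close> as \<open>r + \<Sum>\<^sub>j x\<^sub>j z\<^sub>j\<close> with \<open>r \<in> R\<close>;
then \<open>D \<xi> = f(\<xi> p) - \<xi> f(p)\<close> obeys the hypothesis of the Nakayama lemma, so \<open>f\<close> is
\<open>C\<^sup>\<or>\<close>-linear. The same argument with \<open>D h = f(\<pi>\<^sub>P h) - \<pi>\<^sub>Q(f \<circ> h)\<close> shows that \<open>f\<close>
commutes with the contraactions.
\<close>

section \<open>Sweedler sums and linear maps\<close>

lemma field_vector_space: "vector_space ((*) :: 'k::field \<Rightarrow> 'k \<Rightarrow> 'k)"
  by unfold_locales (auto simp: algebra_simps)

lemma sw_Nil[simp]: "sw b [] = 0" by (simp add: sw_def)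
lemma sw_Cons[simp]: "sw b (p # t) = b (fst p) (snd p) + sw b t"
  by (cases p) (simp add: sw_def)
lemma sw_zero[simp]: "sw (\<lambda>x y. 0) t = 0" by (induct t) auto
lemma sw_sum: "sw (\<lambda>x y. \<Sum>i\<in>I. b i x y) t = (\<Sum>i\<in>I. sw (b i) t)"
  by (induct t) (auto simp: sum.distrib)
lemma sw_cong: "(\<And>x y. (x,y) \<in> set t \<Longrightarrow> b1 x y = b2 x y) \<Longrightarrow> sw b1 t = sw b2 t"
  by (induct t) auto
lemma sw_mult_left: "sw (\<lambda>x y. (c::'a::semiring_0) * b x y) t = c * sw b t"
  by (induct t) (auto simp: algebra_simps)
lemma sw_mult_right: "sw (\<lambda>x y. b x y * (c::'a::semiring_0)) t = sw b t * c"
  by (induct t) (auto simp: algebra_simps)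

lemma additive_0: fixes L :: "'a::monoid_add \<Rightarrow> 'b::ab_group_add"
  assumes "\<And>x y. L (x + y) = L x + L y" shows "L 0 = 0"
proof -
  have "L 0 = L (0 + 0)" by simp
  also have "\<dots> = L 0 + L 0" by (rule assms)
  finally show ?thesis by simp
qed

lemma sw_additive:
  fixes L :: "'a::comm_monoid_add \<Rightarrow> 'b::ab_group_add"
  assumes "\<And>x y. L (x + y) = L x + L y"
  shows "L (sw b t) = sw (\<lambda>x y. L (b x y)) t"
  by (induct t) (auto simp: assms additive_0[of L, OF assms])

lemma lin_add: "Vector_Spaces.linear s1 s2 f \<Longrightarrow> f (x + y) = f x + f y"
  by (simp add: linear_iff)
lemma lin_scale: "Vector_Spaces.linear s1 s2 f \<Longrightarrow> f (s1 c x) = s2 c (f x)"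
  by (simp add: linear_iff)
lemma lin_0: "Vector_Spaces.linear s1 s2 f \<Longrightarrow> f 0 = 0"
  using additive_0[of f] lin_add by metis
lemma lin_diff: "Vector_Spaces.linear s1 s2 f \<Longrightarrow> f (x - y) = f x - f y"
  by (metis lin_add diff_add_cancel eq_diff_eq)
lemma lin_sum: "Vector_Spaces.linear s1 s2 f \<Longrightarrow> f (\<Sum>i\<in>I. v i) = (\<Sum>i\<in>I. f (v i))"
  by (induct I rule: infinite_finite_induct) (auto simp: lin_0 lin_add)
lemma lin_sw: "Vector_Spaces.linear s1 s2 f \<Longrightarrow> f (sw b t) = sw (\<lambda>x y. f (b x y)) t"
  by (rule sw_additive) (simp add: lin_add)
lemma lin_vs1: "Vector_Spaces.linear s1 s2 f \<Longrightarrow> vector_space s1"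
  by (simp add: linear_iff)
lemma lin_vs2: "Vector_Spaces.linear s1 s2 f \<Longrightarrow> vector_space s2"
  by (simp add: linear_iff)

lemma linI:
  assumes "vector_space s1" "vector_space s2"
    "\<And>x y. f (x + y) = f x + f y" "\<And>c x. f (s1 c x) = s2 c (f x)"
  shows "Vector_Spaces.linear s1 s2 f"
  using assms by (simp add: linear_iff)

lemma lin_comp: "Vector_Spaces.linear s1 s2 f \<Longrightarrow> Vector_Spaces.linear s2 s3 h \<Longrightarrow>
   Vector_Spaces.linear s1 s3 (\<lambda>x. h (f x))"
  using Vector_Spaces.linear_compose[of s1 s2 f s3 h] by (simp add: comp_def)

lemma lin_add_fun: assumes "Vector_Spaces.linear s1 s2 f" "Vector_Spaces.linear s1 s2 h"
  shows "Vector_Spaces.linear s1 s2 (\<lambda>x. f x + h x)"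
proof -
  interpret V: vector_space s2 using lin_vs2[OF assms(1)] .
  show ?thesis by (rule linI) (auto simp: lin_vs1[OF assms(1)] lin_vs2[OF assms(1)] lin_add[OF assms(1)]
     lin_add[OF assms(2)] lin_scale[OF assms(1)] lin_scale[OF assms(2)] V.scale_right_distrib algebra_simps)
qed

lemma lin_diff_fun: assumes "Vector_Spaces.linear s1 s2 f" "Vector_Spaces.linear s1 s2 h"
  shows "Vector_Spaces.linear s1 s2 (\<lambda>x. f x - h x)"
proof -
  interpret V: vector_space s2 using lin_vs2[OF assms(1)] .
  show ?thesis by (rule linI) (auto simp: lin_vs1[OF assms(1)] lin_vs2[OF assms(1)] lin_add[OF assms(1)]
     lin_add[OF assms(2)] lin_scale[OF assms(1)] lin_scale[OF assms(2)] V.scale_right_diff_distrib algebra_simps)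
qed

lemma lin_zero_fun: assumes "vector_space s1" "vector_space s2" shows "Vector_Spaces.linear s1 s2 (\<lambda>x. 0)"
proof -
  interpret V: vector_space s2 using assms(2) .
  show ?thesis by (rule linI) (auto simp: assms)
qed

lemma lin_sum_fun: "vector_space s1 \<Longrightarrow> vector_space s2 \<Longrightarrow> (\<And>i. i \<in> I \<Longrightarrow> Vector_Spaces.linear s1 s2 (f i)) \<Longrightarrow>
   Vector_Spaces.linear s1 s2 (\<lambda>x. \<Sum>i\<in>I. f i x)"
proof (induct I rule: infinite_finite_induct)
  case (insert i I)
  then show ?case using lin_add_fun[of s1 s2 "f i" "\<lambda>x. \<Sum>i\<in>I. f i x"] by simp
qed (auto intro: lin_zero_fun)

lemma lin_sum_list_fun: "vector_space s1 \<Longrightarrow> vector_space s2 \<Longrightarrow> (\<And>l. l \<in> set L \<Longrightarrow> Vector_Spaces.linear s1 s2 (f l)) \<Longrightarrow>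
   Vector_Spaces.linear s1 s2 (\<lambda>x. sum_list (map (\<lambda>l. f l x) L))"
proof (induct L)
  case (Cons a L)
  then show ?case using lin_add_fun[of s1 s2 "f a" "\<lambda>x. sum_list (map (\<lambda>l. f l x) L)"] by simp
qed (auto intro: lin_zero_fun)

lemma lin_sw_fun: "vector_space s1 \<Longrightarrow> vector_space s2 \<Longrightarrow> (\<And>a b. (a,b) \<in> set t \<Longrightarrow> Vector_Spaces.linear s1 s2 (f a b)) \<Longrightarrow>
   Vector_Spaces.linear s1 s2 (\<lambda>x. sw (\<lambda>a b. f a b x) t)"
proof (induct t)
  case (Cons p t)
  then show ?case using lin_add_fun[of s1 s2 "f (fst p) (snd p)" "\<lambda>x. sw (\<lambda>a b. f a b x) t"]
    by (cases p) simp
qed (auto intro: lin_zero_fun)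

lemma lin_scale_const: assumes "Vector_Spaces.linear s1 (*) f" "vector_space s2"
  shows "Vector_Spaces.linear s1 s2 (\<lambda>x. s2 (f x) p)"
proof -
  interpret V: vector_space s2 using assms(2) .
  show ?thesis by (rule linI) (auto simp: lin_vs1[OF assms(1)] assms(2) lin_add[OF assms(1)] lin_scale[OF assms(1)]
    V.scale_left_distrib)
qed

lemma lin_scale_fun: assumes "Vector_Spaces.linear s1 s2 f" shows "Vector_Spaces.linear s1 s2 (\<lambda>x. s2 a (f x))"
proof -
  interpret V: vector_space s2 using lin_vs2[OF assms(1)] .
  show ?thesis by (rule linI) (auto simp: lin_vs1[OF assms(1)] lin_vs2[OF assms(1)] lin_add[OF assms(1)]
     lin_scale[OF assms(1)] V.scale_right_distrib mult.commute)
qed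

lemma lin_mult_left: "Vector_Spaces.linear s1 (*) f \<Longrightarrow> Vector_Spaces.linear s1 (*) (\<lambda>x. a * f x)"
  using lin_scale_fun[of s1 "(*)" f a] by simp
lemma lin_mult_right: "Vector_Spaces.linear s1 (*) f \<Longrightarrow> Vector_Spaces.linear s1 (*) (\<lambda>x. f x * a)"
  using lin_scale_fun[of s1 "(*)" f a] by (simp add: mult.commute)

lemma lin_id: "vector_space s \<Longrightarrow> Vector_Spaces.linear s s (\<lambda>x. x)"
  by (rule linI) auto

lemma sum_fun_apply: "(\<Sum>i\<in>I. f i) u = (\<Sum>i\<in>I. f i u)"
  by (induct I rule: infinite_finite_induct) (auto simp: plus_fun_def zero_fun_def)

definition pointwise_scale :: "('k \<Rightarrow> 'v \<Rightarrow> 'v) \<Rightarrow> 'k \<Rightarrow> ('i \<Rightarrow> 'v) \<Rightarrow> 'i \<Rightarrow> 'v" where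
  "pointwise_scale s a f = (\<lambda>i. s a (f i))"

lemma vector_space_pointwise_scale:
  assumes "vector_space s"
  shows "vector_space (pointwise_scale s)"
proof -
  interpret V: vector_space s by fact
  show ?thesis
    by unfold_locales (auto simp: pointwise_scale_def fun_eq_iff V.scale_right_distrib V.scale_left_distrib)
qed

lemma separating_functional:
  fixes s :: "'k::field \<Rightarrow> 'v::ab_group_add \<Rightarrow> 'v"
  assumes vs: "vector_space s" and z: "z \<notin> module.span s U"
  shows "\<exists>F. Vector_Spaces.linear s (*) F \<and> (\<forall>u\<in>module.span s U. F u = 0) \<and> F z = 1"
proof -
  interpret V: vector_space s by fact
  interpret P: vector_space_pair s "(*)" using vs field_vector_space by (simp add: vector_space_pair_def)
  obtain B where B: "B \<subseteq> U" "V.independent B" "U \<subseteq> V.span B"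
    using V.maximal_independent_subset[of U] by blast
  have spB: "V.span B = V.span U"
    using B V.span_mono V.span_minimal by (metis V.span_span subset_antisym)
  have zB: "z \<notin> V.span B" using z spB by simp
  have ind: "V.independent (insert z B)" using V.independent_insertI[OF zB B(2)] .
  obtain F where F: "Vector_Spaces.linear s (*) F" "\<forall>x\<in>insert z B. F x = (if x = z then 1 else 0)"
    using P.linear_independent_extend[OF ind, of "\<lambda>x. if x = z then 1 else 0"] by blast
  have zB': "z \<notin> B" using zB V.span_base by blast
  have "\<forall>u\<in>V.span B. F u = 0"
  proof
    fix u assume u: "u \<in> V.span B"
    have "F u = (\<lambda>x. 0) u"
      by (rule P.linear_eq_on[OF F(1) _ u]) (auto intro: lin_zero_fun vs field_vector_space simp: F(2) zB')
    then show "F u = 0" by simp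
  qed
  then show ?thesis using F spB by auto
qed

lemma nonzero_functional:
  fixes s :: "'k::field \<Rightarrow> 'v::ab_group_add \<Rightarrow> 'v"
  assumes vs: "vector_space s" and z: "z \<noteq> 0"
  shows "\<exists>F. Vector_Spaces.linear s (*) F \<and> F z = 1"
proof -
  have "z \<notin> module.span s {}" using z by (simp add: module.span_empty vs[unfolded module_iff_vector_space[symmetric]])
  then show ?thesis using separating_functional[OF vs] by blast
qed

lemma linear_if_functionals_linear:
  fixes s1 :: "'k::field \<Rightarrow> 'a::ab_group_add \<Rightarrow> 'a" and s2 :: "'k \<Rightarrow> 'b::ab_group_add \<Rightarrow> 'b"
  assumes vs1: "vector_space s1" and vs2: "vector_space s2"
    and H: "\<And>F. Vector_Spaces.linear s2 (*) F \<Longrightarrow> Vector_Spaces.linear s1 (*) (\<lambda>x. F (G x))"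
  shows "Vector_Spaces.linear s1 s2 G"
proof (rule linI[OF vs1 vs2])
  fix x y
  show "G (x + y) = G x + G y"
  proof (rule ccontr)
    assume "G (x + y) \<noteq> G x + G y"
    then have "G (x + y) - (G x + G y) \<noteq> 0" by simp
    then obtain F where F: "Vector_Spaces.linear s2 (*) F" "F (G (x + y) - (G x + G y)) = 1"
      using nonzero_functional[OF vs2] by blast
    have "F (G (x + y)) = F (G x) + F (G y)" using H[OF F(1)] lin_add by blast
    then show False using F by (simp add: lin_diff lin_add)
  qed
next
  fix c x
  show "G (s1 c x) = s2 c (G x)"
  proof (rule ccontr)
    assume "G (s1 c x) \<noteq> s2 c (G x)"
    then have "G (s1 c x) - s2 c (G x) \<noteq> 0" by simp
    then obtain F where F: "Vector_Spaces.linear s2 (*) F" "F (G (s1 c x) - s2 c (G x)) = 1"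
      using nonzero_functional[OF vs2] by blast
    have "F (G (s1 c x)) = c * F (G x)" using H[OF F(1)] lin_scale by fastforce
    then show False using F by (simp add: lin_diff lin_scale)
  qed
qed

lemma linear_functional_finite_support:
  fixes Xi :: "('a \<Rightarrow> 'k::field) \<Rightarrow> 'k"
  assumes Xi: "Vector_Spaces.linear (pointwise_scale (*)) (*) Xi"
    and T: "finite T" and f: "\<And>u. u \<notin> T \<Longrightarrow> f u = 0"
  shows "Xi f = (\<Sum>t\<in>T. f t * Xi (\<lambda>u. if u = t then 1 else 0))"
proof -
  have "f = (\<Sum>t\<in>T. pointwise_scale (*) (f t) (\<lambda>u. if u = t then 1 else 0))"
  proof
    fix u
    have "(\<Sum>t\<in>T. pointwise_scale (*) (f t) (\<lambda>u. if u = t then 1 else 0)) u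
        = (\<Sum>t\<in>T. if u = t then f t else 0)"
      unfolding sum_fun_apply pointwise_scale_def by (rule sum.cong) auto
    also have "\<dots> = f u" using T f by simp
    finally show "f u = (\<Sum>t\<in>T. pointwise_scale (*) (f t) (\<lambda>u. if u = t then 1 else 0)) u" by simp
  qed
  then have "Xi f = Xi (\<Sum>t\<in>T. pointwise_scale (*) (f t) (\<lambda>u. if u = t then 1 else 0))" by simp
  then show ?thesis by (simp add: lin_sum[OF Xi] lin_scale[OF Xi])
qed

section \<open>Multilinear forms and iterated comultiplication\<close>

text \<open>Multilinear forms on \<open>C\<close> vanishing as soon as one argument lies on the line \<open>k g\<close> are
  the multilinear forms on \<open>C\<^sub>+ = C / k g\<close>.\<close>
definition vanishes_on_line :: "('k::field \<Rightarrow> 'c::ab_group_add \<Rightarrow> 'c) \<Rightarrow> 'c \<Rightarrow> nat \<Rightarrow> ('c list \<Rightarrow> 'k) \<Rightarrow> bool" where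
  "vanishes_on_line sC g n phi \<longleftrightarrow> (\<forall>xs i t. length xs = n \<and> i < n \<and> xs ! i = sC t g \<longrightarrow> phi xs = 0)"

definition comult_eval :: "('c \<Rightarrow> ('c \<times> 'c) list) \<Rightarrow> nat \<Rightarrow> 'c \<Rightarrow> ('c list \<Rightarrow> 'k::comm_monoid_add) \<Rightarrow> 'k" where
  "comult_eval mu m c phi = sum_list (map phi (iter_comult mu m c))"

lemma plus_annihilated_iff: "plus_annihilated sC mu g m x \<longleftrightarrow>
  (\<forall>phi. multilinear_form sC (Suc m) phi \<and> vanishes_on_line sC g (Suc m) phi \<longrightarrow> comult_eval mu m x phi = 0)"
  unfolding plus_annihilated_def vanishes_on_line_def comult_eval_def by blast

lemma multilinear_form_iff:
  fixes sC :: "'k::field \<Rightarrow> 'c::ab_group_add \<Rightarrow> 'c" and phi :: "'c list \<Rightarrow> 'k"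
  shows "multilinear_form sC n phi \<longleftrightarrow>
   (\<forall>pre post. length pre + length post + 1 = n \<longrightarrow> Vector_Spaces.linear sC (*) (\<lambda>x. phi (pre @ x # post)))"
proof
  assume H: "multilinear_form sC n phi"
  show "\<forall>pre post. length pre + length post + 1 = n \<longrightarrow> Vector_Spaces.linear sC (*) (\<lambda>x. phi (pre @ x # post))"
  proof (intro allI impI)
    fix pre post :: "'c list" assume L: "length pre + length post + 1 = n"
    have "\<And>x. (pre @ x # post) = (pre @ undefined # post)[length pre := x]" by simp
    moreover have "length (pre @ undefined # post) = n \<and> length pre < n" using L by simp
    then have "Vector_Spaces.linear sC (*) (\<lambda>x. phi ((pre @ undefined # post)[length pre := x]))"
      using H unfolding multilinear_form_def by blast
    ultimately show "Vector_Spaces.linear sC (*) (\<lambda>x. phi (pre @ x # post))" by simp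
  qed
next
  assume H: "\<forall>pre post. length pre + length post + 1 = n \<longrightarrow> Vector_Spaces.linear sC (*) (\<lambda>x. phi (pre @ x # post))"
  show "multilinear_form sC n phi" unfolding multilinear_form_def
  proof (intro allI impI)
    fix xs :: "'c list" and i assume A: "length xs = n \<and> i < n"
    have "\<And>x. xs[i := x] = take i xs @ x # drop (Suc i) xs" using A by (simp add: upd_conv_take_nth_drop)
    moreover have "length (take i xs) + length (drop (Suc i) xs) + 1 = n" using A by simp
    ultimately show "Vector_Spaces.linear sC (*) (\<lambda>x. phi (xs[i := x]))" using H by simp
  qed
qed

lemma vanishes_on_line_iff:
  fixes sC :: "'k::field \<Rightarrow> 'c::ab_group_add \<Rightarrow> 'c" and phi :: "'c list \<Rightarrow> 'k"
  shows "vanishes_on_line sC g n phi \<longleftrightarrow>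
   (\<forall>pre post t. length pre + length post + 1 = n \<longrightarrow> phi (pre @ sC t g # post) = 0)"
proof
  assume H: "vanishes_on_line sC g n phi"
  show "\<forall>pre post t. length pre + length post + 1 = n \<longrightarrow> phi (pre @ sC t g # post) = 0"
  proof (intro allI impI)
    fix pre post :: "'c list" and t assume "length pre + length post + 1 = n"
    then have "length (pre @ sC t g # post) = n \<and> length pre < n \<and> (pre @ sC t g # post) ! length pre = sC t g" by simp
    then show "phi (pre @ sC t g # post) = 0" using H unfolding vanishes_on_line_def by blast
  qed
next
  assume H: "\<forall>pre post t. length pre + length post + 1 = n \<longrightarrow> phi (pre @ sC t g # post) = 0"
  show "vanishes_on_line sC g n phi" unfolding vanishes_on_line_def
  proof (intro allI impI)
    fix xs :: "'c list" and i t assume A: "length xs = n \<and> i < n \<and> xs ! i = sC t g"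
    have "xs = take i xs @ sC t g # drop (Suc i) xs" using A id_take_nth_drop[of i xs] by simp
    moreover have "length (take i xs) + length (drop (Suc i) xs) + 1 = n" using A by simp
    ultimately show "phi xs = 0" using H A by metis
  qed
qed

lemma length_iter_comult: "l \<in> set (iter_comult mu m c) \<Longrightarrow> length l = Suc m"
  by (induct m arbitrary: c l) auto

lemma iter_comult_nonempty: "l \<in> set (iter_comult mu m c) \<Longrightarrow> l \<noteq> []"
  using length_iter_comult by fastforce

lemma comult_eval_0[simp]: "comult_eval mu 0 c phi = phi [c]"
  by (simp add: comult_eval_def)

lemma comult_eval_Suc_aux: "sum_list (map phi (concat (map (\<lambda>(a, b). map (\<lambda>l. a # l) (iter_comult mu m b)) t)))
   = sw (\<lambda>a b. comult_eval mu m b (\<lambda>l. phi (a # l))) t"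
  by (induct t) (auto simp: comult_eval_def comp_def)

lemma comult_eval_Suc: "comult_eval mu (Suc m) c phi = sw (\<lambda>a b. comult_eval mu m b (\<lambda>l. phi (a # l))) (mu c)"
  using comult_eval_Suc_aux[of phi mu m "mu c"] by (simp add: comult_eval_def)

lemma comult_eval_cong: "(\<And>l. l \<in> set (iter_comult mu m c) \<Longrightarrow> phi l = psi l) \<Longrightarrow> comult_eval mu m c phi = comult_eval mu m c psi"
  unfolding comult_eval_def by (metis map_eq_conv)

lemma comult_eval_mult: "comult_eval mu m c (\<lambda>l. (k::'k::semiring_0) * phi l) = k * comult_eval mu m c phi"
  by (simp add: comult_eval_def sum_list_const_mult)

lemma comult_eval_add: "comult_eval mu m c (\<lambda>l. phi l + psi l) = comult_eval mu m c phi + comult_eval mu m c psi"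
  by (simp add: comult_eval_def sum_list_addf)

lemma comult_eval_diff: "comult_eval mu m c (\<lambda>l. (phi l::'k::ab_group_add) - psi l) = comult_eval mu m c phi - comult_eval mu m c psi"
  by (simp add: comult_eval_def sum_list_subtractf)

lemma comult_eval_sum: "comult_eval mu m c (\<lambda>l. \<Sum>i\<in>I. phi i l) = (\<Sum>i\<in>I. comult_eval mu m c (phi i))"
  unfolding comult_eval_def by (induct I rule: infinite_finite_induct) (auto simp: sum_list_addf)

lemma comult_eval_zero[simp]: "comult_eval mu m c (\<lambda>l. 0) = 0"
  by (simp add: comult_eval_def)

lemma comult_eval_Suc_last:
  "comult_eval mu (Suc m) c phi = comult_eval mu m c (\<lambda>l. sw (\<lambda>a b. phi (butlast l @ [a, b])) (mu (last l)))"
proof (induct m arbitrary: c phi)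
  case 0
  then show ?case by (simp add: comult_eval_Suc)
next
  case (Suc m)
  have "comult_eval mu (Suc (Suc m)) c phi = sw (\<lambda>a b. comult_eval mu (Suc m) b (\<lambda>l. phi (a # l))) (mu c)"
    by (rule comult_eval_Suc)
  also have "\<dots> = sw (\<lambda>a b. comult_eval mu m b (\<lambda>l. sw (\<lambda>a' b'. phi (a # (butlast l @ [a', b']))) (mu (last l)))) (mu c)"
    using Suc by simp
  also have "\<dots> = sw (\<lambda>a b. comult_eval mu m b (\<lambda>l. sw (\<lambda>a' b'. phi (butlast (a # l) @ [a', b'])) (mu (last (a # l))))) (mu c)"
  proof (rule sw_cong, rule comult_eval_cong)
    fix a b l assume "l \<in> set (iter_comult mu m b)"
    then have "l \<noteq> []" by (rule iter_comult_nonempty)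
    then show "sw (\<lambda>a' b'. phi (a # (butlast l @ [a', b']))) (mu (last l)) =
      sw (\<lambda>a' b'. phi (butlast (a # l) @ [a', b'])) (mu (last (a # l)))" by simp
  qed
  also have "\<dots> = comult_eval mu (Suc m) c (\<lambda>l. sw (\<lambda>a b. phi (butlast l @ [a, b])) (mu (last l)))"
    by (rule comult_eval_Suc[symmetric])
  finally show ?case .
qed

lemma multilinear_form_add:
  fixes sC :: "'k::field \<Rightarrow> 'c::ab_group_add \<Rightarrow> 'c" and A B :: "'c list \<Rightarrow> 'k"
  shows "multilinear_form sC n A \<Longrightarrow> multilinear_form sC n B \<Longrightarrow> multilinear_form sC n (\<lambda>l. A l + B l)"
  unfolding multilinear_form_iff by (auto intro: lin_add_fun)

lemma multilinear_form_diff: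
  fixes sC :: "'k::field \<Rightarrow> 'c::ab_group_add \<Rightarrow> 'c" and A B :: "'c list \<Rightarrow> 'k"
  shows "multilinear_form sC n A \<Longrightarrow> multilinear_form sC n B \<Longrightarrow> multilinear_form sC n (\<lambda>l. A l - B l)"
  unfolding multilinear_form_iff by (auto intro: lin_diff_fun)

lemma multilinear_form_scale:
  fixes sC :: "'k::field \<Rightarrow> 'c::ab_group_add \<Rightarrow> 'c" and A :: "'c list \<Rightarrow> 'k"
  shows "multilinear_form sC n A \<Longrightarrow> multilinear_form sC n (\<lambda>l. a * A l)"
  unfolding multilinear_form_iff by (auto intro: lin_mult_left)

lemma multilinear_form_sum:
  fixes sC :: "'k::field \<Rightarrow> 'c::ab_group_add \<Rightarrow> 'c" and A :: "'i \<Rightarrow> 'c list \<Rightarrow> 'k"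
  assumes vs: "vector_space sC" and "\<And>i. i \<in> I \<Longrightarrow> multilinear_form sC n (A i)"
  shows "multilinear_form sC n (\<lambda>l. \<Sum>i\<in>I. A i l)"
  using assms(2) unfolding multilinear_form_iff by (auto intro!: lin_sum_fun[OF vs field_vector_space])

lemma vanishes_on_line_add: "vanishes_on_line sC g n A \<Longrightarrow> vanishes_on_line sC g n B \<Longrightarrow> vanishes_on_line sC g n (\<lambda>l. A l + B l)"
  unfolding vanishes_on_line_def by auto
lemma vanishes_on_line_diff: "vanishes_on_line sC g n A \<Longrightarrow> vanishes_on_line sC g n B \<Longrightarrow> vanishes_on_line sC g n (\<lambda>l. (A l::'k::field) - B l)"
  unfolding vanishes_on_line_def by auto
lemma vanishes_on_line_scale: "vanishes_on_line sC g n A \<Longrightarrow> vanishes_on_line sC g n (\<lambda>l. (a::'k::field) * A l)"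
  unfolding vanishes_on_line_def by auto
lemma vanishes_on_line_sum: "(\<And>i. i \<in> I \<Longrightarrow> vanishes_on_line sC g n (A i)) \<Longrightarrow> vanishes_on_line sC g n (\<lambda>l. \<Sum>i\<in>I. (A i l::'k::field))"
  unfolding vanishes_on_line_def by auto

lemma take_append_Cons: "length pre < n \<Longrightarrow> take n (pre @ x # post) = pre @ x # take (n - length pre - 1) post"
  by (simp add: take_Cons' )

lemma drop_append_Cons: "length pre < n \<Longrightarrow> drop n (pre @ x # post) = drop (n - length pre - 1) post"
  by (simp add: drop_Cons')

lemma multilinear_form_concat:
  fixes sC :: "'k::field \<Rightarrow> 'c::ab_group_add \<Rightarrow> 'c" and A B :: "'c list \<Rightarrow> 'k"
  assumes A: "multilinear_form sC n A" and B: "multilinear_form sC m B"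
  shows "multilinear_form sC (n + m) (\<lambda>l. A (take n l) * B (drop n l))"
  unfolding multilinear_form_iff
proof (intro allI impI)
  fix pre post :: "'c list" assume L: "length pre + length post + 1 = n + m"
  show "Vector_Spaces.linear sC (*) (\<lambda>x. A (take n (pre @ x # post)) * B (drop n (pre @ x # post)))"
  proof (cases "length pre < n")
    case True
    have "length pre + length (take (n - length pre - 1) post) + 1 = n" using True L by auto
    then have "Vector_Spaces.linear sC (*) (\<lambda>x. A (pre @ x # take (n - length pre - 1) post))"
      using A unfolding multilinear_form_iff by blast
    then show ?thesis unfolding take_append_Cons[OF True] drop_append_Cons[OF True] by (rule lin_mult_right)
  next
    case False
    have "Vector_Spaces.linear sC (*) (\<lambda>x. B (drop n pre @ x # post))"
      using B False L unfolding multilinear_form_iff by auto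
    then show ?thesis using False by (simp add: lin_mult_left)
  qed
qed

lemma vanishes_on_line_concat:
  fixes sC :: "'k::field \<Rightarrow> 'c::ab_group_add \<Rightarrow> 'c" and A B :: "'c list \<Rightarrow> 'k"
  assumes A: "vanishes_on_line sC g n A" and B: "vanishes_on_line sC g m B"
  shows "vanishes_on_line sC g (n + m) (\<lambda>l. A (take n l) * B (drop n l))"
  unfolding vanishes_on_line_iff
proof (intro allI impI)
  fix pre post :: "'c list" and t assume L: "length pre + length post + 1 = n + m"
  show "A (take n (pre @ sC t g # post)) * B (drop n (pre @ sC t g # post)) = 0"
  proof (cases "length pre < n")
    case True
    have "length pre + length (take (n - length pre - 1) post) + 1 = n" using True L by auto
    then have "A (pre @ sC t g # take (n - length pre - 1) post) = 0"
      using A unfolding vanishes_on_line_iff by blast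
    then show ?thesis unfolding take_append_Cons[OF True] drop_append_Cons[OF True] by simp
  next
    case False
    have "B (drop n pre @ sC t g # post) = 0"
      using B False L unfolding vanishes_on_line_iff by auto
    then show ?thesis using False by simp
  qed
qed

lemma multilinear_form_cong:
  fixes sC :: "'k::field \<Rightarrow> 'c::ab_group_add \<Rightarrow> 'c" and A B :: "'c list \<Rightarrow> 'k"
  assumes "\<And>l. length l = n \<Longrightarrow> A l = B l" "multilinear_form sC n A"
  shows "multilinear_form sC n B"
  unfolding multilinear_form_iff
proof (intro allI impI)
  fix pre post :: "'c list" assume L: "length pre + length post + 1 = n"
  then have "(\<lambda>x. B (pre @ x # post)) = (\<lambda>x. A (pre @ x # post))" using assms(1) by auto
  then show "Vector_Spaces.linear sC (*) (\<lambda>x. B (pre @ x # post))" using assms(2) L unfolding multilinear_form_iff by simp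
qed

lemma multilinear_form_tail:
  fixes sC :: "'k::field \<Rightarrow> 'c::ab_group_add \<Rightarrow> 'c" and A :: "'c list \<Rightarrow> 'k"
  shows "multilinear_form sC (Suc n) A \<Longrightarrow> multilinear_form sC n (\<lambda>l. A (a # l))"
  unfolding multilinear_form_iff
proof (intro allI impI)
  fix pre post :: "'c list"
  assume "\<forall>pre post. length pre + length post + 1 = Suc n \<longrightarrow> Vector_Spaces.linear sC (*) (\<lambda>x. A (pre @ x # post))"
    "length pre + length post + 1 = n"
  then show "Vector_Spaces.linear sC (*) (\<lambda>x. A (a # pre @ x # post))"
    by (auto dest: spec[of _ "a # pre"])
qed

lemma multilinear_form_head:
  fixes sC :: "'k::field \<Rightarrow> 'c::ab_group_add \<Rightarrow> 'c" and A :: "'c list \<Rightarrow> 'k"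
  shows "multilinear_form sC (Suc n) A \<Longrightarrow> length l = n \<Longrightarrow> Vector_Spaces.linear sC (*) (\<lambda>a. A (a # l))"
  unfolding multilinear_form_iff by (auto dest: spec[of _ "[]"])

lemma multilinear_form_init:
  fixes sC :: "'k::field \<Rightarrow> 'c::ab_group_add \<Rightarrow> 'c" and A :: "'c list \<Rightarrow> 'k"
  assumes "multilinear_form sC (Suc n) A"
  shows "multilinear_form sC n (\<lambda>l. A (l @ [v]))"
  unfolding multilinear_form_iff
proof (intro allI impI)
  fix pre post :: "'c list" assume "length pre + length post + 1 = n"
  then have "length pre + length (post @ [v]) + 1 = Suc n" by simp
  then show "Vector_Spaces.linear sC (*) (\<lambda>x. A ((pre @ x # post) @ [v]))"
    using assms unfolding multilinear_form_iff by simp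
qed

lemma vanishes_on_line_init:
  fixes sC :: "'k::field \<Rightarrow> 'c::ab_group_add \<Rightarrow> 'c" and A :: "'c list \<Rightarrow> 'k"
  assumes "vanishes_on_line sC g (Suc n) A"
  shows "vanishes_on_line sC g n (\<lambda>l. A (l @ [v]))"
  unfolding vanishes_on_line_iff
proof (intro allI impI)
  fix pre post :: "'c list" and t assume "length pre + length post + 1 = n"
  then have "length pre + length (post @ [v]) + 1 = Suc n" by simp
  then show "A ((pre @ sC t g # post) @ [v]) = 0"
    using assms unfolding vanishes_on_line_iff by simp
qed

lemma vanishes_on_line_mult_const: "vanishes_on_line sC g n A \<Longrightarrow> vanishes_on_line sC g n (\<lambda>l. A l * (k::'k::field))"
  unfolding vanishes_on_line_def by auto

lemma multilinear_form_zero: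
  fixes sC :: "'k::field \<Rightarrow> 'c::ab_group_add \<Rightarrow> 'c"
  assumes "vector_space sC"
  shows "multilinear_form sC n (\<lambda>l. 0 :: 'k)"
  unfolding multilinear_form_iff by (auto intro: lin_zero_fun[OF assms field_vector_space])

lemma vanishes_on_line_zero: "vanishes_on_line sC g n (\<lambda>l. 0)"
  unfolding vanishes_on_line_def by simp

lemma multilinear_form_last_functional:
  fixes sC :: "'k::field \<Rightarrow> 'c::ab_group_add \<Rightarrow> 'c"
  assumes Mh: "multilinear_form sC (Suc n) Phi" and f: "Vector_Spaces.linear sC (*) f"
  shows "multilinear_form sC (Suc n) (\<lambda>l. Phi (butlast l @ [j]) * f (last l))"
proof (rule multilinear_form_cong[of "Suc n" "\<lambda>l. Phi (take n l @ [j]) * f (hd (drop n l))"])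
  fix l :: "'c list" assume "length l = Suc n"
  then have "last l = l ! n" by (cases l rule: rev_cases) (auto simp: nth_append)
  moreover have "butlast l = take n l" "hd (drop n l) = l ! n" using \<open>length l = Suc n\<close>
    by (auto simp: butlast_conv_take hd_drop_conv_nth)
  ultimately show "Phi (take n l @ [j]) * f (hd (drop n l)) = Phi (butlast l @ [j]) * f (last l)"
    by simp
next
  have "multilinear_form sC (Suc 0) (\<lambda>l. f (hd l))" unfolding multilinear_form_iff using f by auto
  then show "multilinear_form sC (Suc n) (\<lambda>l. Phi (take n l @ [j]) * f (hd (drop n l)))"
    using multilinear_form_concat[OF multilinear_form_init[OF Mh, of j], of "Suc 0" "\<lambda>l. f (hd l)"] by simp
qed

section \<open>Coalgebras\<close>

locale coalg =
  fixes sC :: "'k::field \<Rightarrow> 'c::ab_group_add \<Rightarrow> 'c" and mu :: "'c \<Rightarrow> ('c \<times> 'c) list" and eps :: "'c \<Rightarrow> 'k"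
  assumes coalg: "coalgebra sC mu eps"
begin

abbreviation lin :: "('c \<Rightarrow> 'k) \<Rightarrow> bool" where "lin f \<equiv> Vector_Spaces.linear sC (*) f"

lemma vector_space_C: "vector_space sC" using coalg by (simp add: coalgebra_def)

sublocale C: vector_space sC by (rule vector_space_C)

lemma linear_eps: "lin eps" using coalg by (simp add: coalgebra_def)
lemma coassoc: "trilinear_form sC t \<Longrightarrow>
   sw (\<lambda>a b. sw (\<lambda>x y. t x y b) (mu a)) (mu c) = sw (\<lambda>a b. sw (\<lambda>x y. t a x y) (mu b)) (mu c)"
  using coalg by (simp add: coalgebra_def)
lemma counit_l: "sw (\<lambda>a b. sC (eps a) b) (mu c) = c" using coalg by (simp add: coalgebra_def)
lemma counit_r: "sw (\<lambda>a b. sC (eps b) a) (mu c) = c" using coalg by (simp add: coalgebra_def)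

lemma linear_comult: "(\<And>y. lin (\<lambda>x. b x y)) \<Longrightarrow> (\<And>x. lin (\<lambda>y. b x y)) \<Longrightarrow> lin (\<lambda>c. sw b (mu c))"
  using coalg by (simp add: coalgebra_def bilinear_form_def)

lemma counit_right_map: "Vector_Spaces.linear sC s h \<Longrightarrow> sw (\<lambda>a b. s (eps b) (h a)) (mu c) = h c"
  using lin_sw[of sC s h "\<lambda>a b. sC (eps b) a" "mu c"] counit_r[of c] by (simp add: lin_scale)

lemma counit_left_map: "Vector_Spaces.linear sC s h \<Longrightarrow> sw (\<lambda>a b. s (eps a) (h b)) (mu c) = h c"
  using lin_sw[of sC s h "\<lambda>a b. sC (eps a) b" "mu c"] counit_l[of c] by (simp add: lin_scale)

lemma counit_right_functional: "lin z \<Longrightarrow> sw (\<lambda>a b. z a * eps b) (mu c) = z c"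
  using counit_right_map[of "(*)" z c] by (simp add: mult.commute)

lemma counit_left_functional: "lin z \<Longrightarrow> sw (\<lambda>a b. eps a * z b) (mu c) = z c"
  using counit_left_map[of "(*)" z c] by simp

text \<open>The coalgebra axioms only speak of \<open>k\<close>-valued bilinear forms; vector-valued ones are
  reduced to them by separating functionals.\<close>
lemma linear_comult_map:
  assumes vs: "vector_space sV"
    and B1: "\<And>y. Vector_Spaces.linear sC sV (\<lambda>x. B x y)" and B2: "\<And>x. Vector_Spaces.linear sC sV (\<lambda>y. B x y)"
  shows "Vector_Spaces.linear sC sV (\<lambda>c. sw B (mu c))"
proof (rule linear_if_functionals_linear[OF vector_space_C vs])
  fix F assume F: "Vector_Spaces.linear sV (*) F"
  have "lin (\<lambda>c. sw (\<lambda>a b. F (B a b)) (mu c))"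
    by (rule linear_comult) (auto intro: lin_comp[OF B1 F] lin_comp[OF B2 F])
  then show "lin (\<lambda>x. F (sw B (mu x)))" by (simp add: lin_sw[OF F])
qed

lemma linear_comult_eval: "multilinear_form sC (Suc m) phi \<Longrightarrow> lin (\<lambda>c. comult_eval mu m c phi)"
proof (induct m arbitrary: phi)
  case 0
  then show ?case using multilinear_form_iff[of sC 1 phi] by (auto dest: spec[of _ "[]"])
next
  case (Suc m)
  have M: "\<forall>pre post. length pre + length post + 1 = Suc (Suc m) \<longrightarrow> lin (\<lambda>x. phi (pre @ x # post))"
    using Suc.prems multilinear_form_iff by blast
  show ?case unfolding comult_eval_Suc
  proof (rule linear_comult)
    fix y show "lin (\<lambda>x. comult_eval mu m y (\<lambda>l. phi (x # l)))"
      unfolding comult_eval_def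
    proof (rule lin_sum_list_fun[OF vector_space_C field_vector_space])
      fix l assume "l \<in> set (iter_comult mu m y)"
      then have "length l = Suc m" by (rule length_iter_comult)
      then show "lin (\<lambda>x. phi (x # l))" using M[rule_format, of "[]" l] by simp
    qed
  next
    fix x
    have "multilinear_form sC (Suc m) (\<lambda>l. phi (x # l))"
      unfolding multilinear_form_iff
    proof (intro allI impI)
      fix pre post :: "'c list" assume "length pre + length post + 1 = Suc m"
      then show "lin (\<lambda>y. phi (x # pre @ y # post))" using M[rule_format, of "x # pre" post] by simp
    qed
    then show "lin (\<lambda>y. comult_eval mu m y (\<lambda>l. phi (x # l)))" by (rule Suc.hyps)
  qed
qed

lemma multilinear_form_comult_last:
  assumes "multilinear_form sC (Suc (Suc n)) phi"
  shows "multilinear_form sC (Suc n) (\<lambda>l. sw (\<lambda>a b. phi (butlast l @ [a, b])) (mu (last l)))"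
  unfolding multilinear_form_iff
proof (intro allI impI)
  have M: "\<And>pre post. length pre + length post + 1 = Suc (Suc n) \<Longrightarrow> lin (\<lambda>x. phi (pre @ x # post))"
    using assms multilinear_form_iff by blast
  fix pre post :: "'c list" assume L: "length pre + length post + 1 = Suc n"
  show "lin (\<lambda>x. sw (\<lambda>a b. phi (butlast (pre @ x # post) @ [a, b])) (mu (last (pre @ x # post))))"
  proof (cases post rule: rev_cases)
    case Nil
    have "lin (\<lambda>x. sw (\<lambda>a b. phi (pre @ [a, b])) (mu x))"
    proof (rule linear_comult)
      fix y show "lin (\<lambda>x. phi (pre @ [x, y]))" using M[of pre "[y]"] L Nil by simp
    next
      fix x show "lin (\<lambda>y. phi (pre @ [x, y]))" using M[of "pre @ [x]" "[]"] L Nil by simp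
    qed
    then show ?thesis using Nil by simp
  next
    case (snoc ys y)
    have "lin (\<lambda>x. sw (\<lambda>a b. phi (pre @ x # ys @ [a, b])) (mu y))"
    proof (rule lin_sw_fun[OF vector_space_C field_vector_space])
      fix a b show "lin (\<lambda>x. phi (pre @ x # ys @ [a, b]))" using M[of pre "ys @ [a, b]"] L snoc by simp
    qed
    then show ?thesis using snoc by (simp add: butlast_append)
  qed
qed

lemma linear_comult_eval_head:
  assumes A: "multilinear_form sC (Suc (Suc m)) A"
  shows "lin (\<lambda>a. comult_eval mu m b (\<lambda>l. A (a # l)))"
  unfolding comult_eval_def
proof (rule lin_sum_list_fun[OF vector_space_C field_vector_space])
  fix l assume "l \<in> set (iter_comult mu m b)"
  then have "length l = Suc m" by (rule length_iter_comult)
  then show "lin (\<lambda>a. A (a # l))" by (rule multilinear_form_head[OF A])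
qed

end

locale coaug = coalg sC mu eps for sC :: "'k::field \<Rightarrow> 'c::ab_group_add \<Rightarrow> 'c" and mu eps +
  fixes g :: 'c
  assumes coaug: "coaugmentation sC mu eps g"
begin

lemma eps_coaug: "eps g = 1" using coaug by (simp add: coaugmentation_def)
lemma comult_coaug: "(\<And>y. lin (\<lambda>x. b x y)) \<Longrightarrow> (\<And>x. lin (\<lambda>y. b x y)) \<Longrightarrow> sw b (mu g) = b g g"
  using coaug by (simp add: coaugmentation_def bilinear_form_def)

lemma vanishes_on_line_comult_last:
  assumes "multilinear_form sC (Suc (Suc n)) phi" and "vanishes_on_line sC g (Suc (Suc n)) phi"
  shows "vanishes_on_line sC g (Suc n) (\<lambda>l. sw (\<lambda>a b. phi (butlast l @ [a, b])) (mu (last l)))"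
  unfolding vanishes_on_line_iff
proof (intro allI impI)
  have M: "\<And>pre post. length pre + length post + 1 = Suc (Suc n) \<Longrightarrow> lin (\<lambda>x. phi (pre @ x # post))"
    using assms(1) multilinear_form_iff by blast
  have V: "\<And>pre post t. length pre + length post + 1 = Suc (Suc n) \<Longrightarrow> phi (pre @ sC t g # post) = 0"
    using assms(2) vanishes_on_line_iff by blast
  fix pre post :: "'c list" and t assume L: "length pre + length post + 1 = Suc n"
  show "sw (\<lambda>a b. phi (butlast (pre @ sC t g # post) @ [a, b])) (mu (last (pre @ sC t g # post))) = 0"
  proof (cases post rule: rev_cases)
    case Nil
    have bil1: "lin (\<lambda>x. phi (pre @ [x, y]))" for y using M[of pre "[y]"] L Nil by simp
    have bil2: "lin (\<lambda>y. phi (pre @ [x, y]))" for x using M[of "pre @ [x]" "[]"] L Nil by simp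
    have "sw (\<lambda>a b. phi (pre @ [a, b])) (mu (sC t g)) = t * sw (\<lambda>a b. phi (pre @ [a, b])) (mu g)"
      using lin_scale[OF linear_comult[OF bil1 bil2]] by simp
    also have "\<dots> = t * phi (pre @ [g, g])" using comult_coaug[OF bil1 bil2] by simp
    also have "phi (pre @ [g, g]) = phi (pre @ sC 1 g # [g])" by simp
    also have "\<dots> = 0" using V[of pre "[g]" 1] L Nil by simp
    finally show ?thesis using Nil by simp
  next
    case (snoc ys y)
    have "phi (pre @ sC t g # ys @ [a, b]) = 0" for a b using V[of pre "ys @ [a, b]" t] L snoc by simp
    then show ?thesis using snoc by (simp add: butlast_append)
  qed
qed

lemma plus_annihilated_Suc:
  assumes "plus_annihilated sC mu g n c"
  shows "plus_annihilated sC mu g (Suc n) c"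
  unfolding plus_annihilated_iff
proof (intro allI impI)
  fix phi assume "multilinear_form sC (Suc (Suc n)) phi \<and> vanishes_on_line sC g (Suc (Suc n)) phi"
  then have "comult_eval mu n c (\<lambda>l. sw (\<lambda>a b. phi (butlast l @ [a, b])) (mu (last l))) = 0"
    using assms multilinear_form_comult_last vanishes_on_line_comult_last
    unfolding plus_annihilated_iff by blast
  then show "comult_eval mu (Suc n) c phi = 0" by (simp add: comult_eval_Suc_last)
qed

lemma comult_eval_last_form_eq_0:
  assumes pa: "plus_annihilated sC mu g (Suc n) c"
    and Phi: "multilinear_form sC (Suc n) Phi" "vanishes_on_line sC g n (\<lambda>l. Phi (l @ [t]))"
    and Om: "multilinear_form sC 2 Om" "vanishes_on_line sC g 2 Om"
  shows "comult_eval mu n c (\<lambda>l. comult_eval mu 1 (last l) Om * Phi (butlast l @ [t])) = 0"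
proof -
  define Psi where "Psi = (\<lambda>l. Phi (take n l @ [t]) * Om (drop n l))"
  have "multilinear_form sC (Suc (Suc n)) Psi"
    using multilinear_form_concat[OF multilinear_form_init[OF Phi(1)] Om(1)] unfolding Psi_def by simp
  moreover have "vanishes_on_line sC g (Suc (Suc n)) Psi"
    using vanishes_on_line_concat[OF Phi(2) Om(2)] unfolding Psi_def by simp
  ultimately have "comult_eval mu (Suc n) c Psi = 0" using pa unfolding plus_annihilated_iff by blast
  moreover have "comult_eval mu (Suc n) c Psi
      = comult_eval mu n c (\<lambda>l. comult_eval mu 1 (last l) Om * Phi (butlast l @ [t]))"
    unfolding comult_eval_Suc_last
  proof (rule comult_eval_cong)
    fix l assume "l \<in> set (iter_comult mu n c)"
    then have "length (butlast l) = n" using length_iter_comult by fastforce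
    then show "sw (\<lambda>a b. Psi (butlast l @ [a, b])) (mu (last l))
        = comult_eval mu 1 (last l) Om * Phi (butlast l @ [t])"
      by (simp add: Psi_def sw_mult_left comult_eval_Suc)
  qed
  ultimately show ?thesis by simp
qed

lemma plus_annihilated_mono: "plus_annihilated sC mu g n c \<Longrightarrow> n \<le> m \<Longrightarrow> plus_annihilated sC mu g m c"
  by (induct m) (auto simp: le_Suc_eq intro: plus_annihilated_Suc)

lemma plus_annihilated_0: assumes "plus_annihilated sC mu g 0 c" shows "c \<in> C.span {g}"
proof (rule ccontr)
  assume "c \<notin> C.span {g}"
  then obtain F where F: "lin F" "\<forall>u\<in>C.span {g}. F u = 0" "F c = 1"
    using separating_functional[OF vector_space_C] by blast
  have "multilinear_form sC (Suc 0) (\<lambda>l. F (hd l))"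
    unfolding multilinear_form_iff using F(1) by auto
  moreover have "vanishes_on_line sC g (Suc 0) (\<lambda>l. F (hd l))"
    unfolding vanishes_on_line_iff using F(2) by (auto intro: C.span_scale C.span_base)
  ultimately have "comult_eval mu 0 c (\<lambda>l. F (hd l)) = 0" using assms unfolding plus_annihilated_iff by blast
  then show False using F(3) by simp
qed

end

fun dual_prod :: "('c \<Rightarrow> ('c \<times> 'c) list) \<Rightarrow> ('c \<Rightarrow> 'k::comm_ring_1) \<Rightarrow> ('c \<Rightarrow> 'k) list \<Rightarrow> 'c \<Rightarrow> 'k" where
  "dual_prod mu eps [] = eps"
| "dual_prod mu eps (z # zs) = (\<lambda>c. sw (\<lambda>a b. z a * dual_prod mu eps zs b) (mu c))"

fun prod_form :: "('c \<Rightarrow> 'k::comm_ring_1) list \<Rightarrow> 'c list \<Rightarrow> 'k" where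
  "prod_form [] l = 1"
| "prod_form (z # zs) l = z (hd l) * prod_form zs (tl l)"

context coalg
begin

lemma linear_dual_prod: "(\<forall>z\<in>set zs. lin z) \<Longrightarrow> lin (dual_prod mu eps zs)"
proof (induct zs)
  case Nil
  then show ?case using linear_eps by simp
next
  case (Cons z zs)
  then have "lin z" "lin (dual_prod mu eps zs)" by auto
  then show ?case by (simp, intro linear_comult) (auto intro: lin_mult_right lin_mult_left)
qed

lemma multilinear_prod_form: "(\<forall>z\<in>set zs. lin z) \<Longrightarrow> multilinear_form sC (length zs) (prod_form zs)"
proof -
  assume A: "\<forall>z\<in>set zs. lin z"
  have "\<forall>pre post. length pre + length post + 1 = length zs \<longrightarrow> lin (\<lambda>x. prod_form zs (pre @ x # post))"
    using A
  proof (induct zs)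
    case Nil
    then show ?case by simp
  next
    case (Cons z zs)
    show ?case
    proof (intro allI impI)
      fix pre post :: "'c list" assume L: "length pre + length post + 1 = length (z # zs)"
      show "lin (\<lambda>x. prod_form (z # zs) (pre @ x # post))"
      proof (cases pre)
        case Nil
        then show ?thesis using Cons.prems by (simp add: lin_mult_right)
      next
        case (Cons p pre')
        then show ?thesis using Cons.hyps[rule_format, of pre' post] \<open>\<forall>z\<in>set (z # zs). lin z\<close> L
          by (simp add: lin_mult_left)
      qed
    qed
  qed
  then show ?thesis by (simp add: multilinear_form_iff)
qed

lemma dual_prod_eq_comult_eval: "zs \<noteq> [] \<Longrightarrow> (\<forall>z\<in>set zs. lin z) \<Longrightarrow> dual_prod mu eps zs c = comult_eval mu (length zs - 1) c (prod_form zs)"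
proof (induct zs arbitrary: c)
  case Nil
  then show ?case by simp
next
  case (Cons z zs)
  show ?case
  proof (cases zs)
    case Nil
    then show ?thesis using counit_right_functional[of z c] Cons.prems by simp
  next
    case (Cons z' zs')
    then obtain m where m: "length zs = Suc m" by simp
    have ne: "zs \<noteq> []" using Cons by simp
    have IH: "dual_prod mu eps zs b = comult_eval mu m b (prod_form zs)" for b
      using Cons.hyps[OF ne] Cons.prems m by simp
    have "dual_prod mu eps (z # zs) c = sw (\<lambda>a b. z a * comult_eval mu m b (prod_form zs)) (mu c)"
      by (simp add: IH)
    also have "\<dots> = sw (\<lambda>a b. comult_eval mu m b (\<lambda>l. prod_form (z # zs) (a # l))) (mu c)"
      by (simp add: comult_eval_mult)
    also have "\<dots> = comult_eval mu (length (z # zs) - 1) c (prod_form (z # zs))"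
      using m by (simp add: comult_eval_Suc)
    finally show ?thesis .
  qed
qed

end

context coaug
begin

lemma prod_form_vanishes_on_line: "(\<forall>z\<in>set zs. lin z \<and> z g = 0) \<Longrightarrow> vanishes_on_line sC g (length zs) (prod_form zs)"
proof -
  assume A: "\<forall>z\<in>set zs. lin z \<and> z g = 0"
  have "\<forall>pre post t. length pre + length post + 1 = length zs \<longrightarrow> prod_form zs (pre @ sC t g # post) = 0"
    using A
  proof (induct zs)
    case Nil
    then show ?case by simp
  next
    case (Cons z zs)
    show ?case
    proof (intro allI impI)
      fix pre post :: "'c list" and t assume L: "length pre + length post + 1 = length (z # zs)"
      show "prod_form (z # zs) (pre @ sC t g # post) = 0"
      proof (cases pre)
        case Nil
        then show ?thesis using Cons.prems lin_scale[of sC "(*)" z t g] by simp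
      next
        case (Cons p pre')
        then show ?thesis using Cons.hyps[rule_format, of pre' post t] \<open>\<forall>z\<in>set (z # zs). lin z \<and> z g = 0\<close> L
          by simp
      qed
    qed
  qed
  then show ?thesis by (simp add: vanishes_on_line_iff)
qed

lemma dual_prod_eq_0:
  assumes "plus_annihilated sC mu g n c" "\<forall>z\<in>set zs. lin z \<and> z g = 0" "Suc n \<le> length zs"
  shows "dual_prod mu eps zs c = 0"
proof -
  obtain m where m: "length zs = Suc m" using assms(3) by (cases "length zs") auto
  have "plus_annihilated sC mu g m c" using plus_annihilated_mono[OF assms(1)] assms(3) m by simp
  moreover have "multilinear_form sC (Suc m) (prod_form zs)" using multilinear_prod_form[of zs] assms(2) m by simp
  moreover have "vanishes_on_line sC g (Suc m) (prod_form zs)" using prod_form_vanishes_on_line[of zs] assms(2) m by simp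
  ultimately have "comult_eval mu m c (prod_form zs) = 0" unfolding plus_annihilated_iff by blast
  moreover have "zs \<noteq> []" using m by auto
  ultimately show ?thesis using dual_prod_eq_comult_eval[of zs c] assms(2) m by simp
qed

end

section \<open>Contramodules\<close>

locale contra = coalg sC mu eps for sC :: "'k::field \<Rightarrow> 'c::ab_group_add \<Rightarrow> 'c" and mu eps +
  fixes sP :: "'k \<Rightarrow> 'p::ab_group_add \<Rightarrow> 'p" and pi :: "('c \<Rightarrow> 'p) \<Rightarrow> 'p"
  assumes cm: "contramodule sC mu eps sP pi"
begin

abbreviation linP :: "('c \<Rightarrow> 'p) \<Rightarrow> bool" where "linP h \<equiv> Vector_Spaces.linear sC sP h"

abbreviation act :: "('c \<Rightarrow> 'k) \<Rightarrow> 'p \<Rightarrow> 'p" where "act \<equiv> contra_act sP pi"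

lemma vector_space_P: "vector_space sP" using cm by (simp add: contramodule_def)

sublocale P: vector_space sP by (rule vector_space_P)

lemma pi_add: "linP h1 \<Longrightarrow> linP h2 \<Longrightarrow> pi (\<lambda>c. h1 c + h2 c) = pi h1 + pi h2"
  using cm by (simp add: contramodule_def)
lemma pi_scale: "linP h \<Longrightarrow> pi (\<lambda>c. sP a (h c)) = sP a (pi h)"
  using cm by (simp add: contramodule_def)
lemma pi_assoc: "(\<And>v. linP (gg v)) \<Longrightarrow> (\<And>u. linP (\<lambda>v. gg v u)) \<Longrightarrow>
    pi (\<lambda>c. sw (\<lambda>a b. gg b a) (mu c)) = pi (\<lambda>c. pi (gg c))"
  using cm by (simp add: contramodule_def)
lemma pi_eps: "pi (\<lambda>c. sP (eps c) p) = p"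
  using cm by (simp add: contramodule_def)

lemma linP_zero: "linP (\<lambda>c. 0)" by (rule lin_zero_fun[OF vector_space_C vector_space_P])

lemma pi_zero: "pi (\<lambda>c. 0) = 0"
  using pi_scale[OF linP_zero, of 0] by simp

lemma pi_diff: "linP h1 \<Longrightarrow> linP h2 \<Longrightarrow> pi (\<lambda>c. h1 c - h2 c) = pi h1 - pi h2"
proof -
  assume A: "linP h1" "linP h2"
  have l: "linP (\<lambda>c. h1 c - h2 c)" by (rule lin_diff_fun[OF A])
  have "pi (\<lambda>c. (h1 c - h2 c) + h2 c) = pi (\<lambda>c. h1 c - h2 c) + pi h2" by (rule pi_add[OF l A(2)])
  then show ?thesis by (simp add: algebra_simps)
qed

lemma pi_sum: "(\<And>i. i \<in> I \<Longrightarrow> linP (h i)) \<Longrightarrow> pi (\<lambda>c. \<Sum>i\<in>I. h i c) = (\<Sum>i\<in>I. pi (h i))"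
proof (induct I rule: infinite_finite_induct)
  case (infinite I)
  then show ?case by (simp add: pi_zero)
next
  case empty
  then show ?case by (simp add: pi_zero)
next
  case (insert i I)
  have "linP (\<lambda>c. \<Sum>i\<in>I. h i c)" by (rule lin_sum_fun[OF vector_space_C vector_space_P]) (use insert in auto)
  then show ?case using insert pi_add[of "h i" "\<lambda>c. \<Sum>i\<in>I. h i c"] by simp
qed

lemma linP_scale: "lin phi \<Longrightarrow> linP (\<lambda>c. sP (phi c) p)"
  by (rule lin_scale_const[OF _ vector_space_P])

lemma act_add: "lin phi \<Longrightarrow> act phi (p + q) = act phi p + act phi q"
  unfolding contra_act_def
  using pi_add[OF linP_scale[of phi p] linP_scale[of phi q]] by (simp add: P.scale_right_distrib)

lemma act_0: "lin phi \<Longrightarrow> act phi 0 = 0"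
  unfolding contra_act_def by (simp add: pi_zero)

lemma act_diff: "lin phi \<Longrightarrow> act phi (p - q) = act phi p - act phi q"
  using act_add[of phi "p - q" q] by (simp add: algebra_simps)

lemma act_add_functional: "lin phi \<Longrightarrow> lin psi \<Longrightarrow> act (\<lambda>c. phi c + psi c) p = act phi p + act psi p"
  unfolding contra_act_def
  using pi_add[OF linP_scale[of phi p] linP_scale[of psi p]] by (simp add: P.scale_left_distrib)

lemma act_scalar: "act (\<lambda>c. a * eps c) p = sP a p"
  unfolding contra_act_def
  using pi_scale[OF linP_scale[OF linear_eps], of a p] by (simp add: pi_eps)

lemma act_pi: assumes "lin phi" "linP h"
  shows "act phi (pi h) = pi (\<lambda>c. sw (\<lambda>a b. sP (phi b) (h a)) (mu c))"
proof -
  define gg where "gg = (\<lambda>v u. sP (phi v) (h u))"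
  have "pi (\<lambda>c. sw (\<lambda>a b. gg b a) (mu c)) = pi (\<lambda>c. pi (gg c))"
  proof (rule pi_assoc)
    fix v show "linP (gg v)" unfolding gg_def by (rule lin_scale_fun[OF assms(2)])
  next
    fix u show "linP (\<lambda>v. gg v u)" unfolding gg_def by (rule linP_scale[OF assms(1)])
  qed
  moreover have "pi (gg c) = sP (phi c) (pi h)" for c unfolding gg_def by (rule pi_scale[OF assms(2)])
  ultimately show ?thesis unfolding contra_act_def gg_def by simp
qed

lemma scale_sw: "sP (sw f t) p = sw (\<lambda>a b. sP (f a b) p) t"
  by (rule sw_additive[of "\<lambda>s. sP s p"]) (simp add: P.scale_left_distrib)

lemma act_act: assumes "lin phi" "lin psi"
  shows "act phi (act psi p) = act (dual_mult mu phi psi) p"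
proof -
  have "act phi (act psi p) = pi (\<lambda>c. sw (\<lambda>a b. sP (phi b) (sP (psi a) p)) (mu c))"
    unfolding contra_act_def[of sP pi psi] by (rule act_pi[OF assms(1) linP_scale[OF assms(2)]])
  also have "\<dots> = act (dual_mult mu phi psi) p"
    unfolding contra_act_def dual_mult_def scale_sw by (simp add: mult.commute)
  finally show ?thesis .
qed

lemma act_sum_functional:
  "(\<And>j. j \<in> I \<Longrightarrow> lin (phi j)) \<Longrightarrow> act (\<lambda>c. \<Sum>j\<in>I. phi j c) p = (\<Sum>j\<in>I. act (phi j) p)"
  unfolding contra_act_def by (simp add: P.scale_sum_left pi_sum linP_scale)

lemma act_decomposed:
  assumes r: "lin r" and x: "\<And>j. j \<in> J \<Longrightarrow> lin (x j)" and z: "\<And>j. j \<in> J \<Longrightarrow> lin (z j)"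
  shows "act (\<lambda>c. r c + (\<Sum>j\<in>J. sw (\<lambda>a b. x j b * z j a) (mu c))) p
    = act r p + (\<Sum>j\<in>J. act (x j) (act (z j) p))"
proof -
  have prod_lin: "lin (dual_mult mu (x j) (z j))" if "j \<in> J" for j
    unfolding dual_mult_def by (rule linear_comult[OF lin_mult_right lin_mult_left]) (use x z that in auto)
  have sum_lin: "lin (\<lambda>c. \<Sum>j\<in>J. dual_mult mu (x j) (z j) c)"
    by (rule lin_sum_fun[OF vector_space_C field_vector_space prod_lin])
  have "(\<lambda>c. r c + (\<Sum>j\<in>J. sw (\<lambda>a b. x j b * z j a) (mu c)))
      = (\<lambda>c. r c + (\<Sum>j\<in>J. dual_mult mu (x j) (z j) c))"
    by (simp add: dual_mult_def mult.commute)
  then have "act (\<lambda>c. r c + (\<Sum>j\<in>J. sw (\<lambda>a b. x j b * z j a) (mu c))) p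
      = act r p + (\<Sum>j\<in>J. act (dual_mult mu (x j) (z j)) p)"
    by (simp only: act_add_functional[OF r sum_lin] act_sum_functional[OF prod_lin])
  also have "\<dots> = act r p + (\<Sum>j\<in>J. act (x j) (act (z j) p))"
    by (simp add: act_act x z)
  finally show ?thesis .
qed

lemma pi_decomposed:
  assumes x: "\<And>j. j \<in> J \<Longrightarrow> lin (x j)" and h: "\<And>j. j \<in> J \<Longrightarrow> linP (h j)"
  shows "pi (\<lambda>c. sP (eps c) p + (\<Sum>j\<in>J. sw (\<lambda>a b. sP (x j b) (h j a)) (mu c)))
    = p + (\<Sum>j\<in>J. act (x j) (pi (h j)))"
proof -
  have summand_lin: "linP (\<lambda>c. sw (\<lambda>a b. sP (x j b) (h j a)) (mu c))" if "j \<in> J" for j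
    by (rule linear_comult_map[OF vector_space_P lin_scale_fun lin_scale_const[OF x vector_space_P]])
      (use h that in auto)
  have "linP (\<lambda>c. \<Sum>j\<in>J. sw (\<lambda>a b. sP (x j b) (h j a)) (mu c))"
    by (rule lin_sum_fun[OF vector_space_C vector_space_P summand_lin])
  then show ?thesis
    by (simp add: pi_add[OF linP_scale[OF linear_eps]] pi_eps pi_sum summand_lin act_pi x h)
qed

end

lemma contra_hom_imp_R_module_hom:
  assumes P: "contramodule sC mu eps sP piP" and R: "R \<subseteq> dual sC"
    and f: "contra_hom sC sP piP sQ piQ f"
  shows "R_module_hom R sP piP sQ piQ f"
proof -
  have f_lin: "Vector_Spaces.linear sP sQ f"
    and f_pi: "\<And>h. Vector_Spaces.linear sC sP h \<Longrightarrow> f (piP h) = piQ (f \<circ> h)"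
    using f by (auto simp: contra_hom_def)
  have "f (contra_act sP piP r p) = contra_act sQ piQ r (f p)" if "r \<in> R" for r p
  proof -
    have "Vector_Spaces.linear sC sP (\<lambda>c. sP (r c) p)"
      using that R P by (intro lin_scale_const) (auto simp: dual_def contramodule_def)
    then show ?thesis by (simp add: contra_act_def f_pi comp_def lin_scale[OF f_lin])
  qed
  then show ?thesis by (simp add: R_module_hom_def lin_add[OF f_lin])
qed

section \<open>A Nakayama lemma for contramodules over a conilpotent coalgebra\<close>

locale conilpotent_contramodule = contra sC mu eps sP pi + coaug sC mu eps g
  for sC :: "'k::field \<Rightarrow> 'c::ab_group_add \<Rightarrow> 'c" and mu eps and sP :: "'k \<Rightarrow> 'p::ab_group_add \<Rightarrow> 'p" and pi g +
  fixes J :: "'j set" and x :: "'j \<Rightarrow> 'c \<Rightarrow> 'k"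
  assumes finJ: "finite J" and xlin: "\<And>j. j \<in> J \<Longrightarrow> lin (x j)" and xg: "\<And>j. j \<in> J \<Longrightarrow> x j g = 0"
    and conil: "\<And>c. \<exists>n. plus_annihilated sC mu g n c"
begin

definition word_prod :: "'j list \<Rightarrow> 'c \<Rightarrow> 'k" where "word_prod w = dual_prod mu eps (map x w)"
definition words :: "nat \<Rightarrow> 'j list set" where "words N = {w. set w \<subseteq> J \<and> length w \<le> N}"
definition words_vanish :: "nat \<Rightarrow> 'c \<Rightarrow> bool" where "words_vanish N c \<longleftrightarrow> (\<forall>w. set w \<subseteq> J \<longrightarrow> N \<le> length w \<longrightarrow> word_prod w c = 0)"
definition word_degree :: "'c \<Rightarrow> nat" where "word_degree c = (LEAST N. words_vanish N c)"
text \<open>\<open>word_sum r\<close> is the infinite formal sum \<open>\<Sum>\<^sub>w x\<^sub>w r\<^sub>w\<close> over words \<open>w\<close>, viewed as an element of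
  \<open>Hom(C, P)\<close>: at each \<open>c\<close> only words shorter than \<open>word_degree c\<close> contribute, by conilpotency.\<close>
definition word_sum :: "('j list \<Rightarrow> 'p) \<Rightarrow> 'c \<Rightarrow> 'p" where "word_sum r c = (\<Sum>w\<in>words (word_degree c). sP (word_prod w c) (r w))"

lemma word_prod_Nil: "word_prod [] = eps" by (simp add: word_prod_def)
lemma word_prod_Cons: "word_prod (j # w) c = sw (\<lambda>a b. x j a * word_prod w b) (mu c)" by (simp add: word_prod_def)
lemma linear_word_prod: "set w \<subseteq> J \<Longrightarrow> lin (word_prod w)"
  unfolding word_prod_def by (rule linear_dual_prod) (use xlin in auto)

lemma finite_words: "finite (words N)"
  unfolding words_def by (rule finite_lists_length_le[OF finJ])

lemma words_vanish_ex: "\<exists>N. words_vanish N c"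
proof -
  obtain n where n: "plus_annihilated sC mu g n c" using conil by blast
  have "words_vanish (Suc n) c" unfolding words_vanish_def word_prod_def
  proof (intro allI impI)
    fix w :: "'j list" assume "set w \<subseteq> J" "Suc n \<le> length w"
    then show "dual_prod mu eps (map x w) c = 0"
      by (intro dual_prod_eq_0[OF n]) (auto simp: xlin xg)
  qed
  then show ?thesis by blast
qed

lemma words_vanish_degree: "words_vanish (word_degree c) c"
  unfolding word_degree_def using words_vanish_ex[of c] by (rule LeastI_ex)

lemma words_vanish_mono: "words_vanish N c \<Longrightarrow> N \<le> M \<Longrightarrow> words_vanish M c"
  unfolding words_vanish_def by auto

lemma word_sum_extend:
  assumes "words_vanish N c" "N \<le> M"
  shows "(\<Sum>w\<in>words M. sP (word_prod w c) (r w)) = (\<Sum>w\<in>words N. sP (word_prod w c) (r w))"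
proof (rule sum.mono_neutral_right[OF finite_words])
  show "words N \<subseteq> words M" using assms(2) unfolding words_def by auto
  show "\<forall>w\<in>words M - words N. sP (word_prod w c) (r w) = 0"
    using assms(1) unfolding words_vanish_def words_def by auto
qed

lemma word_sum_eq: "words_vanish N c \<Longrightarrow> word_sum r c = (\<Sum>w\<in>words N. sP (word_prod w c) (r w))"
  unfolding word_sum_def
  using word_sum_extend[where N=N and c=c and M="max N (word_degree c)" and r=r] word_sum_extend[OF words_vanish_degree, where M="max N (word_degree c)" and r=r] by simp

lemma linP_word_sum: "linP (word_sum r)"
proof (rule linI[OF vector_space_C vector_space_P])
  fix c c'
  define N where "N = max (word_degree c) (max (word_degree c') (word_degree (c + c')))"
  have k: "words_vanish N c" "words_vanish N c'" "words_vanish N (c + c')"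
    unfolding N_def by (rule words_vanish_mono[OF words_vanish_degree], simp)+
  have "word_sum r (c + c') = (\<Sum>w\<in>words N. sP (word_prod w (c + c')) (r w))" by (rule word_sum_eq[OF k(3)])
  also have "\<dots> = (\<Sum>w\<in>words N. sP (word_prod w c) (r w) + sP (word_prod w c') (r w))"
    by (rule sum.cong) (auto simp: words_def lin_add[OF linear_word_prod] P.scale_left_distrib)
  also have "\<dots> = word_sum r c + word_sum r c'" by (simp add: sum.distrib word_sum_eq[OF k(1)] word_sum_eq[OF k(2)])
  finally show "word_sum r (c + c') = word_sum r c + word_sum r c'" .
next
  fix a c
  define N where "N = max (word_degree c) (word_degree (sC a c))"
  have k: "words_vanish N c" "words_vanish N (sC a c)"
    unfolding N_def by (rule words_vanish_mono[OF words_vanish_degree], simp)+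
  have "word_sum r (sC a c) = (\<Sum>w\<in>words N. sP (word_prod w (sC a c)) (r w))" by (rule word_sum_eq[OF k(2)])
  also have "\<dots> = (\<Sum>w\<in>words N. sP a (sP (word_prod w c) (r w)))"
    by (rule sum.cong) (auto simp: words_def lin_scale[OF linear_word_prod])
  also have "\<dots> = sP a (word_sum r c)" by (simp add: P.scale_sum_right word_sum_eq[OF k(1)])
  finally show "word_sum r (sC a c) = sP a (word_sum r c)" .
qed

lemma words_Suc: "words (Suc N) = insert [] ((\<lambda>(j, w). j # w) ` (J \<times> words N))"
proof
  show "words (Suc N) \<subseteq> insert [] ((\<lambda>(j, w). j # w) ` (J \<times> words N))"
  proof
    fix w assume w: "w \<in> words (Suc N)"
    show "w \<in> insert [] ((\<lambda>(j, w). j # w) ` (J \<times> words N))"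
    proof (cases w)
      case (Cons j w')
      then have "(j, w') \<in> J \<times> words N" using w by (auto simp: words_def)
      then show ?thesis using Cons by force
    qed simp
  qed
  show "insert [] ((\<lambda>(j, w). j # w) ` (J \<times> words N)) \<subseteq> words (Suc N)"
    by (auto simp: words_def)
qed

lemma sum_words_Suc: "(\<Sum>w\<in>words (Suc N). F w) = F [] + (\<Sum>w\<in>words N. \<Sum>j\<in>J. F (j # w))"
proof -
  have inj: "inj_on (\<lambda>(j, w). j # w) (J \<times> words N)" by (auto simp: inj_on_def)
  have fin: "finite ((\<lambda>(j, w). j # w) ` (J \<times> words N))" using finJ finite_words by auto
  have "(\<Sum>w\<in>words (Suc N). F w) = F [] + (\<Sum>w\<in>(\<lambda>(j, w). j # w) ` (J \<times> words N). F w)"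
    unfolding words_Suc by (rule sum.insert[OF fin]) auto
  also have "(\<Sum>w\<in>(\<lambda>(j, w). j # w) ` (J \<times> words N). F w) = (\<Sum>(j, w)\<in>J \<times> words N. F (j # w))"
    by (subst sum.reindex[OF inj]) (simp add: case_prod_unfold)
  also have "\<dots> = (\<Sum>j\<in>J. \<Sum>w\<in>words N. F (j # w))" by (rule sum.cartesian_product[symmetric])
  also have "\<dots> = (\<Sum>w\<in>words N. \<Sum>j\<in>J. F (j # w))" by (rule sum.swap)
  finally show ?thesis .
qed

lemma linP_sum_scale: "linP (\<lambda>u. \<Sum>j\<in>J. sP (x j u) (r j))"
  by (rule lin_sum_fun[OF vector_space_C vector_space_P]) (simp add: lin_scale_const[OF xlin vector_space_P])

text \<open>Contraassociativity applied to this element of \<open>Hom(C, Hom(C, P))\<close> telescopes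
  \<open>word_sum q\<close>.\<close>
definition shifted_word_sum :: "('j list \<Rightarrow> 'p) \<Rightarrow> 'c \<Rightarrow> 'c \<Rightarrow> 'p" where
  "shifted_word_sum q v u = word_sum (\<lambda>w. \<Sum>j\<in>J. sP (x j u) (q (j # w))) v"

lemma linP_shifted_word_sum: "linP (shifted_word_sum q v)"
proof -
  have "linP (\<lambda>u. \<Sum>w\<in>words (word_degree v). sP (word_prod w v) (\<Sum>j\<in>J. sP (x j u) (q (j # w))))"
    by (rule lin_sum_fun[OF vector_space_C vector_space_P]) (rule lin_scale_fun[OF linP_sum_scale])
  then show ?thesis by (simp add: shifted_word_sum_def[abs_def] word_sum_def)
qed

lemma linP_shifted_word_sum_arg: "linP (\<lambda>v. shifted_word_sum q v u)"
  unfolding shifted_word_sum_def by (rule linP_word_sum)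

lemma pi_shifted_word_sum:
  assumes q_rec: "\<And>w. q w = (\<Sum>j\<in>J. act (x j) (q (j # w)))"
  shows "pi (shifted_word_sum q c) = word_sum q c"
proof -
  have pi_summand: "pi (\<lambda>u. \<Sum>j\<in>J. sP (x j u) (q (j # w))) = q w" for w
    unfolding q_rec[of w] contra_act_def by (rule pi_sum) (rule linP_scale[OF xlin])
  have "pi (shifted_word_sum q c)
      = pi (\<lambda>u. \<Sum>w\<in>words (word_degree c). sP (word_prod w c) (\<Sum>j\<in>J. sP (x j u) (q (j # w))))"
    by (simp add: shifted_word_sum_def[abs_def] word_sum_def)
  also have "\<dots> = (\<Sum>w\<in>words (word_degree c). sP (word_prod w c) (pi (\<lambda>u. \<Sum>j\<in>J. sP (x j u) (q (j # w)))))"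
    by (simp add: pi_sum pi_scale lin_scale_fun[OF linP_sum_scale] linP_sum_scale)
  also have "\<dots> = word_sum q c"
    by (simp add: pi_summand word_sum_def)
  finally show ?thesis .
qed

lemma comult_shifted_word_sum:
  "sw (\<lambda>a b. shifted_word_sum q b a) (mu c) = word_sum q c - sP (eps c) (q [])"
proof -
  define N where "N = Max (insert (word_degree c) ((\<lambda>p. word_degree (snd p)) ` set (mu c)))"
  have vanish_c: "words_vanish N c" unfolding N_def by (rule words_vanish_mono[OF words_vanish_degree]) simp
  have vanish_b: "words_vanish N b" if "(a, b) \<in> set (mu c)" for a b
  proof -
    have "word_degree b \<in> insert (word_degree c) ((\<lambda>p. word_degree (snd p)) ` set (mu c))"
      using that by (auto intro!: image_eqI[where x="(a, b)"])
    then have "word_degree b \<le> N" unfolding N_def by (intro Max_ge) auto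
    then show ?thesis by (rule words_vanish_mono[OF words_vanish_degree])
  qed
  have "sw (\<lambda>a b. shifted_word_sum q b a) (mu c) =
      sw (\<lambda>a b. \<Sum>w\<in>words N. sP (word_prod w b) (\<Sum>j\<in>J. sP (x j a) (q (j # w)))) (mu c)"
    unfolding shifted_word_sum_def by (rule sw_cong) (rule word_sum_eq[OF vanish_b])
  also have "\<dots> = (\<Sum>w\<in>words N. \<Sum>j\<in>J. sP (word_prod (j # w) c) (q (j # w)))"
    by (simp add: P.scale_sum_right mult.commute sw_sum word_prod_Cons scale_sw)
  also have "\<dots> = (\<Sum>w\<in>words (Suc N). sP (word_prod w c) (q w)) - sP (eps c) (q [])"
    by (simp add: sum_words_Suc word_prod_Nil)
  also have "\<dots> = word_sum q c - sP (eps c) (q [])"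
    using word_sum_eq[OF words_vanish_mono[OF vanish_c, of "Suc N"], of q] by simp
  finally show ?thesis .
qed

lemma word_recursion_Nil:
  assumes q_rec: "\<And>w. q w = (\<Sum>j\<in>J. act (x j) (q (j # w)))"
  shows "q [] = 0"
proof -
  have "pi (\<lambda>c. word_sum q c - sP (eps c) (q [])) = pi (\<lambda>c. pi (shifted_word_sum q c))"
    unfolding comult_shifted_word_sum[symmetric]
    by (rule pi_assoc[OF linP_shifted_word_sum linP_shifted_word_sum_arg])
  also have "\<dots> = pi (word_sum q)"
    by (simp add: pi_shifted_word_sum[OF q_rec])
  finally show ?thesis
    using pi_diff[OF linP_word_sum linP_scale[OF linear_eps]] pi_eps by simp
qed

lemma contramodule_nakayama:
  fixes D :: "'a \<Rightarrow> 'p"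
  assumes "\<And>\<xi>. \<exists>\<eta>. D \<xi> = (\<Sum>j\<in>J. act (x j) (D (\<eta> j)))"
  shows "D \<xi>\<^sub>0 = 0"
proof -
  obtain succ where step: "\<And>\<xi>. D \<xi> = (\<Sum>j\<in>J. act (x j) (D (succ \<xi> j)))"
    using assms by metis
  define path :: "'j list \<Rightarrow> 'a" where "path = rec_list \<xi>\<^sub>0 (\<lambda>j w \<xi>. succ \<xi> j)"
  have "D (path w) = (\<Sum>j\<in>J. act (x j) (D (path (j # w))))" for w
    by (simp only: path_def list.rec) (rule step)
  then have "D (path []) = 0" by (rule word_recursion_Nil)
  then show ?thesis by (simp add: path_def)
qed

end

section \<open>Consequences of the finite dimensionality of \<open>H\<^sup>1\<close>\<close>

locale finite_H1 = coaug sC mu eps g for sC :: "'k::field \<Rightarrow> 'c::ab_group_add \<Rightarrow> 'c" and mu eps g +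
  fixes S0 :: "'c set"
  assumes conil: "\<And>c. \<exists>n. plus_annihilated sC mu g n c"
    and finite_S0: "finite S0" and H1_spanned: "\<And>y. plus_annihilated sC mu g 1 y \<Longrightarrow> y \<in> C.span (insert g S0)"
begin

text \<open>The preimage of \<open>H\<^sup>1(C) \<subseteq> C\<^sub>+\<close> in \<open>C\<close>; \<open>H1_basis\<close> below is a basis, containing \<open>g\<close>, of a
  finite-dimensional subspace containing it.\<close>
definition H1 :: "'c set" where "H1 = {y. plus_annihilated sC mu g 1 y}"

lemma coaug_nonzero: "g \<noteq> 0"
  using eps_coaug lin_0[OF linear_eps] by auto

lemma H1_basis_ex: "\<exists>B. g \<in> B \<and> B \<subseteq> C.span (insert g S0) \<and> C.independent B \<and> C.span (insert g S0) \<subseteq> C.span B"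
proof -
  have "{g} \<subseteq> C.span (insert g S0)" by (simp add: C.span_base)
  moreover have "C.independent {g}" using coaug_nonzero by simp
  ultimately obtain B where "{g} \<subseteq> B" "B \<subseteq> C.span (insert g S0)" "C.independent B" "C.span (insert g S0) \<subseteq> C.span B"
    by (rule C.maximal_independent_subset_extend)
  then show ?thesis by blast
qed

definition H1_basis :: "'c set" where
  "H1_basis = (SOME B. g \<in> B \<and> B \<subseteq> C.span (insert g S0) \<and> C.independent B \<and> C.span (insert g S0) \<subseteq> C.span B)"

lemma H1_basis: "g \<in> H1_basis" "H1_basis \<subseteq> C.span (insert g S0)" "C.independent H1_basis" "C.span (insert g S0) \<subseteq> C.span H1_basis"
  using someI_ex[OF H1_basis_ex] unfolding H1_basis_def by blast+

lemma finite_H1_basis: "finite H1_basis"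
  using C.independent_span_bound[OF _ H1_basis(3) H1_basis(2)] finite_S0 by simp

definition basis :: "'c set" where "basis = C.extend_basis H1_basis"

lemma basis: "H1_basis \<subseteq> basis" "C.independent basis" "C.span basis = UNIV"
  unfolding basis_def using C.extend_basis_superset[OF H1_basis(3)] C.independent_extend_basis[OF H1_basis(3)]
    C.span_extend_basis[OF H1_basis(3)] by auto

definition coord :: "'c \<Rightarrow> 'c \<Rightarrow> 'k" where "coord b y = C.representation basis y b"

lemma linear_coord: "lin (coord b)"
  unfolding coord_def by (rule C.linear_representation[OF basis(2,3)])

lemma coord_basis: "b \<in> basis \<Longrightarrow> b' \<in> basis \<Longrightarrow> coord b b' = (if b = b' then 1 else 0)"
  unfolding coord_def using C.representation_basis[OF basis(2), of b'] by auto

lemma H1_basis_expansion: "y \<in> C.span H1_basis \<Longrightarrow> y = (\<Sum>b\<in>H1_basis. sC (coord b y) b)"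
  unfolding coord_def
  using C.representation_extend[OF basis(2) _ basis(1), of y] C.sum_representation_eq[OF H1_basis(3) _ finite_H1_basis, of y]
  by simp

lemma H1_in_span_H1_basis: "y \<in> H1 \<Longrightarrow> y \<in> C.span H1_basis"
  using H1_spanned H1_basis(4) unfolding H1_def by blast

definition gens :: "'c set" where "gens = H1_basis - {g}"

lemma finite_gens: "finite gens" unfolding gens_def using finite_H1_basis by simp

lemma coord_gens_coaug: "j \<in> gens \<Longrightarrow> coord j g = 0"
  unfolding gens_def using coord_basis[of j g] basis(1) H1_basis(1) by auto

lemma linear_comult_eval_1: "multilinear_form sC 2 Om \<Longrightarrow> lin (\<lambda>y. comult_eval mu 1 y Om)"
  using linear_comult_eval[of 1 Om] by (simp add: numeral_2_eq_2)

lemma H1_iff: "y \<in> H1 \<longleftrightarrow> (\<forall>Om. multilinear_form sC 2 Om \<and> vanishes_on_line sC g 2 Om \<longrightarrow> comult_eval mu 1 y Om = 0)"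
  unfolding H1_def plus_annihilated_iff by (simp add: numeral_2_eq_2)

lemma subspace_H1: "C.subspace H1"
  unfolding C.subspace_def
proof (intro conjI ballI allI)
  show "0 \<in> H1" unfolding H1_iff using lin_0[OF linear_comult_eval_1] by blast
  fix x y assume "x \<in> H1" "y \<in> H1"
  then show "x + y \<in> H1" unfolding H1_iff using lin_add[OF linear_comult_eval_1] by (metis add_0)
next
  fix c x assume "x \<in> H1"
  then show "sC c x \<in> H1" unfolding H1_iff using lin_scale[OF linear_comult_eval_1] by (metis mult_zero_right)
qed

end

context finite_H1
begin

definition independent_mod_H1 :: "'c set \<Rightarrow> bool" where
  "independent_mod_H1 T \<longleftrightarrow> (\<forall>a. (\<Sum>t\<in>T. sC (a t) t) \<in> H1 \<longrightarrow> (\<forall>t\<in>T. a t = 0))"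

definition test_values :: "'c set \<Rightarrow> ('c \<Rightarrow> 'k) set" where
  "test_values T = {f. \<exists>Om. multilinear_form sC 2 Om \<and> vanishes_on_line sC g 2 Om \<and>
     f = (\<lambda>t. if t \<in> T then comult_eval mu 1 t Om else 0)}"

lemma subspace_test_values: "module.subspace (pointwise_scale (*)) (test_values T)"
  unfolding module.subspace_def[OF vector_space_pointwise_scale[OF field_vector_space, unfolded module_iff_vector_space[symmetric]]]
proof (intro conjI ballI allI)
  show "0 \<in> test_values T" unfolding test_values_def
    by (rule CollectI, rule exI[of _ "\<lambda>l. 0"]) (auto simp: multilinear_form_zero[OF vector_space_C] vanishes_on_line_zero fun_eq_iff)
next
  fix f1 f2 assume "f1 \<in> test_values T" "f2 \<in> test_values T"
  then obtain O1 O2 where O: "multilinear_form sC 2 O1" "vanishes_on_line sC g 2 O1"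
    "f1 = (\<lambda>t. if t \<in> T then comult_eval mu 1 t O1 else 0)"
    "multilinear_form sC 2 O2" "vanishes_on_line sC g 2 O2"
    "f2 = (\<lambda>t. if t \<in> T then comult_eval mu 1 t O2 else 0)"
    unfolding test_values_def by blast
  show "f1 + f2 \<in> test_values T" unfolding test_values_def
    by (rule CollectI, rule exI[of _ "\<lambda>l. O1 l + O2 l"])
      (auto simp: O multilinear_form_add vanishes_on_line_add fun_eq_iff comult_eval_add)
next
  fix c f assume "f \<in> test_values T"
  then obtain O1 where O: "multilinear_form sC 2 O1" "vanishes_on_line sC g 2 O1"
    "f = (\<lambda>t. if t \<in> T then comult_eval mu 1 t O1 else 0)"
    unfolding test_values_def by blast
  show "pointwise_scale (*) c f \<in> test_values T" unfolding test_values_def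
    by (rule CollectI, rule exI[of _ "\<lambda>l. c * O1 l"])
      (auto simp: O multilinear_form_scale vanishes_on_line_scale fun_eq_iff comult_eval_mult pointwise_scale_def)
qed

lemma dual_form_exists:
  assumes T: "finite T" and ind: "independent_mod_H1 T" and s: "s \<in> T"
  obtains Om where "multilinear_form sC 2 Om" "vanishes_on_line sC g 2 Om"
    "\<And>t. t \<in> T \<Longrightarrow> comult_eval mu 1 t Om = (if t = s then 1 else 0)"
proof -
  interpret F: vector_space "pointwise_scale (*)" by (rule vector_space_pointwise_scale[OF field_vector_space])
  define e where "e = (\<lambda>t. if t = s then 1 else (0::'k))"
  have "e \<in> test_values T"
  proof (rule ccontr)
    assume "e \<notin> test_values T"
    then have "e \<notin> F.span (test_values T)" using subspace_test_values F.span_eq_iff by blast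
    then obtain Xi where Xi: "Vector_Spaces.linear (pointwise_scale (*)) (*) Xi"
      "\<forall>u\<in>F.span (test_values T). Xi u = 0" "Xi e = 1"
      using separating_functional[OF vector_space_pointwise_scale[OF field_vector_space]] by blast
    define a where "a t = Xi (\<lambda>u. if u = t then 1 else 0)" for t
    have "(\<Sum>t\<in>T. sC (a t) t) \<in> H1"
      unfolding H1_iff
    proof (intro allI impI)
      fix Om assume Om: "multilinear_form sC 2 Om \<and> vanishes_on_line sC g 2 Om"
      have l: "lin (\<lambda>y. comult_eval mu 1 y Om)" using linear_comult_eval_1 Om by blast
      have "(\<lambda>t. if t \<in> T then comult_eval mu 1 t Om else 0) \<in> F.span (test_values T)"
        using Om by (auto simp: test_values_def intro: F.span_base)
      then have "0 = Xi (\<lambda>t. if t \<in> T then comult_eval mu 1 t Om else 0)" using Xi(2) by simp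
      also have "\<dots> = (\<Sum>t\<in>T. (if t \<in> T then comult_eval mu 1 t Om else 0) * a t)"
        unfolding a_def by (rule linear_functional_finite_support[OF Xi(1) T]) simp
      also have "\<dots> = (\<Sum>t\<in>T. a t * comult_eval mu 1 t Om)" by (rule sum.cong) auto
      also have "\<dots> = comult_eval mu 1 (\<Sum>t\<in>T. sC (a t) t) Om"
        unfolding lin_sum[OF l] lin_scale[OF l] by (rule refl)
      finally show "comult_eval mu 1 (\<Sum>t\<in>T. sC (a t) t) Om = 0" by simp
    qed
    then have "\<forall>t\<in>T. a t = 0" using ind unfolding independent_mod_H1_def by blast
    moreover have "Xi e = (\<Sum>t\<in>T. e t * a t)"
      unfolding a_def by (rule linear_functional_finite_support[OF Xi(1) T]) (use s in \<open>auto simp: e_def\<close>)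
    ultimately show False using Xi(3) by simp
  qed
  then obtain Om where Om: "multilinear_form sC 2 Om" "vanishes_on_line sC g 2 Om"
    and e_eq: "e = (\<lambda>t. if t \<in> T then comult_eval mu 1 t Om else 0)"
    unfolding test_values_def by blast
  show thesis
  proof (rule that[OF Om])
    fix t assume "t \<in> T"
    then show "comult_eval mu 1 t Om = (if t = s then 1 else 0)" using fun_cong[OF e_eq, of t] by (simp add: e_def)
  qed
qed

lemma reduce_mod_H1_if_dependent:
  assumes T: "finite T" "independent_mod_H1 T"
    and y: "y \<notin> T" "\<not> independent_mod_H1 (insert y T)"
  shows "\<exists>b. y - (\<Sum>t\<in>T. sC (b t) t) \<in> H1"
proof -
  obtain a where a: "(\<Sum>t\<in>insert y T. sC (a t) t) \<in> H1" "\<exists>t\<in>insert y T. a t \<noteq> 0"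
    using y(2) unfolding independent_mod_H1_def by blast
  have sum_insert: "(\<Sum>t\<in>insert y T. sC (a t) t) = sC (a y) y + (\<Sum>t\<in>T. sC (a t) t)"
    using y(1) T(1) by simp
  have ay: "a y \<noteq> 0"
  proof
    assume "a y = 0"
    then have "(\<Sum>t\<in>T. sC (a t) t) \<in> H1" using a(1) sum_insert by simp
    then have "\<forall>t\<in>T. a t = 0" using T(2) unfolding independent_mod_H1_def by blast
    then show False using a(2) \<open>a y = 0\<close> by auto
  qed
  define b where "b t = - (a t / a y)" for t
  have "sC (b t) t = - sC (inverse (a y)) (sC (a t) t)" for t
    by (simp add: b_def divide_inverse mult.commute)
  then have "(\<Sum>t\<in>T. sC (b t) t) = - sC (inverse (a y)) (\<Sum>t\<in>T. sC (a t) t)"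
    by (simp add: sum_negf C.scale_sum_right)
  then have "y - (\<Sum>t\<in>T. sC (b t) t) = sC (inverse (a y)) (\<Sum>t\<in>insert y T. sC (a t) t)"
    using ay by (simp add: sum_insert C.scale_right_distrib)
  then have "y - (\<Sum>t\<in>T. sC (b t) t) \<in> H1" using C.subspace_scale[OF subspace_H1 a(1)] by metis
  then show ?thesis by blast
qed

lemma independent_mod_H1_maximal:
  assumes Y: "finite Y"
  obtains T where "T \<subseteq> Y" "independent_mod_H1 T"
    "\<And>y. y \<in> Y \<Longrightarrow> \<exists>b. y - (\<Sum>t\<in>T. sC (b t) t) \<in> H1"
proof -
  define P where "P T \<longleftrightarrow> T \<subseteq> Y \<and> independent_mod_H1 T" for T
  have P0: "P {}" by (simp add: P_def independent_mod_H1_def)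
  have bound: "\<forall>T. P T \<longrightarrow> card T < Suc (card Y)"
    using card_mono[OF Y] by (auto simp: P_def less_Suc_eq_le)
  obtain T where PT: "P T" and maxT: "\<forall>T'. P T' \<longrightarrow> card T' \<le> card T"
    using ex_has_greatest_nat[OF P0 bound] by blast
  have T: "finite T" using PT Y by (auto simp: P_def intro: finite_subset)
  have ind: "independent_mod_H1 T" using PT by (simp add: P_def)
  have "\<exists>b. y - (\<Sum>t\<in>T. sC (b t) t) \<in> H1" if y: "y \<in> Y" for y
  proof (cases "y \<in> T")
    case True
    have "(\<Sum>t\<in>T. sC (if t = y then 1 else 0) t) = (\<Sum>t\<in>T. if t = y then t else 0)"
      by (rule sum.cong) auto
    then have "y - (\<Sum>t\<in>T. sC (if t = y then 1 else 0) t) = 0" using T True by simp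
    then show ?thesis using C.subspace_0[OF subspace_H1] by metis
  next
    case False
    have "\<not> independent_mod_H1 (insert y T)"
    proof
      assume "independent_mod_H1 (insert y T)"
      then have "card (insert y T) \<le> card T" using maxT PT y by (simp add: P_def)
      then show False using False T by simp
    qed
    then show ?thesis by (rule reduce_mod_H1_if_dependent[OF T ind False])
  qed
  with PT show thesis by (intro that[of T]) (auto simp: P_def)
qed

lemma reduction_mod_H1:
  assumes Y: "finite Y"
  obtains T Om where "finite T" "\<And>t. t \<in> T \<Longrightarrow> multilinear_form sC 2 (Om t) \<and> vanishes_on_line sC g 2 (Om t)"
    "\<And>y. y \<in> Y \<Longrightarrow> y - (\<Sum>t\<in>T. sC (comult_eval mu 1 y (Om t)) t) \<in> H1"
proof -
  obtain T where TY: "T \<subseteq> Y" and ind: "independent_mod_H1 T"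
    and cover: "\<And>y. y \<in> Y \<Longrightarrow> \<exists>b. y - (\<Sum>t\<in>T. sC (b t) t) \<in> H1"
    by (rule independent_mod_H1_maximal[OF Y]) blast
  have T: "finite T" using TY Y by (rule finite_subset)
  have "\<forall>s\<in>T. \<exists>Om. multilinear_form sC 2 Om \<and> vanishes_on_line sC g 2 Om \<and>
      (\<forall>t\<in>T. comult_eval mu 1 t Om = (if t = s then 1 else 0))"
  proof
    fix s assume "s \<in> T"
    then show "\<exists>Om. multilinear_form sC 2 Om \<and> vanishes_on_line sC g 2 Om \<and>
      (\<forall>t\<in>T. comult_eval mu 1 t Om = (if t = s then 1 else 0))"
      by (rule dual_form_exists[OF T ind]) blast
  qed
  then obtain Om where Om: "\<And>s. s \<in> T \<Longrightarrow> multilinear_form sC 2 (Om s) \<and> vanishes_on_line sC g 2 (Om s) \<and>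
      (\<forall>t\<in>T. comult_eval mu 1 t (Om s) = (if t = s then 1 else 0))"
    by (metis bchoice)
  have "y - (\<Sum>t\<in>T. sC (comult_eval mu 1 y (Om t)) t) \<in> H1" if y: "y \<in> Y" for y
  proof -
    obtain b where b: "y - (\<Sum>t\<in>T. sC (b t) t) \<in> H1" using cover[OF y] by blast
    have "comult_eval mu 1 y (Om s) = b s" if s: "s \<in> T" for s
    proof -
      define z where "z = y - (\<Sum>t\<in>T. sC (b t) t)"
      have l: "lin (\<lambda>y. comult_eval mu 1 y (Om s))" using linear_comult_eval_1 Om s by blast
      have "comult_eval mu 1 y (Om s) = comult_eval mu 1 (z + (\<Sum>t\<in>T. sC (b t) t)) (Om s)"
        by (simp add: z_def)
      also have "\<dots> = comult_eval mu 1 z (Om s) + (\<Sum>t\<in>T. b t * comult_eval mu 1 t (Om s))"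
        unfolding lin_add[OF l] lin_sum[OF l] lin_scale[OF l] by (rule refl)
      also have "comult_eval mu 1 z (Om s) = 0" using b Om s unfolding z_def H1_iff by blast
      also have "(\<Sum>t\<in>T. b t * comult_eval mu 1 t (Om s)) = (\<Sum>t\<in>T. if t = s then b t else 0)"
        by (rule sum.cong) (use Om s in auto)
      finally show ?thesis using T s by simp
    qed
    then have "(\<Sum>t\<in>T. sC (comult_eval mu 1 y (Om t)) t) = (\<Sum>t\<in>T. sC (b t) t)"
      by (intro sum.cong) auto
    then show ?thesis using b by simp
  qed
  with T Om show thesis by (intro that) auto
qed

lemma comult_eval_eq_0_if_kills_H1:
  assumes pa: "plus_annihilated sC mu g (Suc n) c"
    and Phi: "multilinear_form sC (Suc n) Phi" "\<And>v. vanishes_on_line sC g n (\<lambda>l. Phi (l @ [v]))"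
    and kills_H1: "\<And>pre y. length pre = n \<Longrightarrow> y \<in> H1 \<Longrightarrow> Phi (pre @ [y]) = 0"
  shows "comult_eval mu n c Phi = 0"
proof -
  obtain T Om where T: "finite T"
    and Om: "\<And>t. t \<in> T \<Longrightarrow> multilinear_form sC 2 (Om t) \<and> vanishes_on_line sC g 2 (Om t)"
    and reduce: "\<And>y. y \<in> last ` set (iter_comult mu n c) \<Longrightarrow>
      y - (\<Sum>t\<in>T. sC (comult_eval mu 1 y (Om t)) t) \<in> H1"
    by (rule reduction_mod_H1[of "last ` set (iter_comult mu n c)"]) auto
  have expand: "Phi l = (\<Sum>t\<in>T. comult_eval mu 1 (last l) (Om t) * Phi (butlast l @ [t]))"
    if l: "l \<in> set (iter_comult mu n c)" for l
  proof -
    define pre y where "pre = butlast l" and "y = last l"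
    have pre: "length pre = n" unfolding pre_def using length_iter_comult[OF l] by simp
    have l_eq: "l = pre @ [y]" unfolding pre_def y_def using iter_comult_nonempty[OF l] by simp
    have lin_last: "lin (\<lambda>y. Phi (pre @ [y]))" using Phi(1) pre unfolding multilinear_form_iff by simp
    define z where "z = y - (\<Sum>t\<in>T. sC (comult_eval mu 1 y (Om t)) t)"
    have "z \<in> H1" unfolding z_def y_def by (rule reduce) (use l in auto)
    have "Phi l = Phi (pre @ [z + (\<Sum>t\<in>T. sC (comult_eval mu 1 y (Om t)) t)])"
      by (simp add: l_eq z_def)
    also have "\<dots> = Phi (pre @ [z]) + (\<Sum>t\<in>T. comult_eval mu 1 y (Om t) * Phi (pre @ [t]))"
      by (simp add: lin_add[OF lin_last] lin_sum[OF lin_last] lin_scale[OF lin_last])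
    finally show ?thesis using kills_H1[OF pre \<open>z \<in> H1\<close>] by (simp add: pre_def y_def)
  qed
  have "comult_eval mu n c Phi
      = (\<Sum>t\<in>T. comult_eval mu n c (\<lambda>l. comult_eval mu 1 (last l) (Om t) * Phi (butlast l @ [t])))"
    by (simp add: comult_eval_cong[OF expand] comult_eval_sum)
  also have "\<dots> = 0"
  proof (rule sum.neutral, rule ballI)
    fix t assume "t \<in> T"
    with Om show "comult_eval mu n c (\<lambda>l. comult_eval mu 1 (last l) (Om t) * Phi (butlast l @ [t])) = 0"
      by (intro comult_eval_last_form_eq_0[OF pa Phi(1,2)]) auto
  qed
  finally show ?thesis .
qed

end

locale finite_H1_lifts = finite_H1 sC mu eps g S0 for sC :: "'k::field \<Rightarrow> 'c::ab_group_add \<Rightarrow> 'c" and mu eps g S0 +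
  fixes lift :: "'c \<Rightarrow> 'c \<Rightarrow> 'k"
  assumes linear_lift: "\<And>j. j \<in> gens \<Longrightarrow> lin (lift j)"
    and lift_on_span: "\<And>j y. j \<in> gens \<Longrightarrow> y \<in> C.span H1_basis \<Longrightarrow> lift j y = coord j y"
begin

lemma lift_coaug: "j \<in> gens \<Longrightarrow> lift j g = 0"
  using lift_on_span[of j g] coord_gens_coaug H1_basis(1) C.span_base by auto

definition ract :: "'c \<Rightarrow> 'c \<Rightarrow> 'c" where "ract j c = sw (\<lambda>a b. sC (lift j b) a) (mu c)"

lemma linear_ract: assumes j: "j \<in> gens" shows "Vector_Spaces.linear sC sC (ract j)"
  unfolding ract_def
  by (rule linear_comult_map[OF vector_space_C lin_scale_fun[OF lin_id[OF vector_space_C]] lin_scale_const[OF linear_lift[OF j] vector_space_C]])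

lemma eps_ract: "j \<in> gens \<Longrightarrow> eps (ract j c) = lift j c"
  unfolding ract_def lin_sw[OF linear_eps]
  using counit_left_functional[OF linear_lift, of j c] by (simp add: lin_scale[OF linear_eps] mult.commute)

lemma ract_coaug: assumes j: "j \<in> gens" shows "ract j g = 0"
proof (rule ccontr)
  assume "ract j g \<noteq> 0"
  then obtain F where F: "lin F" "F (ract j g) = 1" using nonzero_functional[OF vector_space_C] by blast
  have "F (ract j g) = sw (\<lambda>a b. lift j b * F a) (mu g)"
    unfolding ract_def lin_sw[OF F(1)] by (simp add: lin_scale[OF F(1)])
  also have "\<dots> = lift j g * F g"
    by (rule comult_coaug[OF lin_mult_left[OF F(1)] lin_mult_right[OF linear_lift[OF j]]])
  also have "\<dots> = 0" using lift_coaug[OF j] by simp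
  finally show False using F(2) by simp
qed

lemma comult_ract:
  assumes j: "j \<in> gens" and b1: "\<And>y. lin (\<lambda>x. beta x y)" and b2: "\<And>x. lin (\<lambda>y. beta x y)"
  shows "sw beta (mu (ract j c)) = sw (\<lambda>a b. beta a (ract j b)) (mu c)"
proof -
  have Lb: "lin (\<lambda>c. sw beta (mu c))" by (rule linear_comult[OF b1 b2])
  have "sw beta (mu (ract j c)) = sw (\<lambda>a' b'. lift j b' * sw beta (mu a')) (mu c)"
    unfolding ract_def lin_sw[OF Lb] by (simp add: lin_scale[OF Lb])
  also have "\<dots> = sw (\<lambda>a' b'. sw (\<lambda>p q. beta p q * lift j b') (mu a')) (mu c)"
    by (simp add: sw_mult_right mult.commute)
  also have "\<dots> = sw (\<lambda>a' b'. sw (\<lambda>p q. beta a' p * lift j q) (mu b')) (mu c)"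
  proof (rule coassoc[of "\<lambda>p q r. beta p q * lift j r"])
    show "trilinear_form sC (\<lambda>p q r. beta p q * lift j r)"
      unfolding trilinear_form_def
      by (intro conjI allI lin_mult_right[OF b1] lin_mult_right[OF b2] lin_mult_left[OF linear_lift[OF j]])
  qed
  also have "\<dots> = sw (\<lambda>a b. beta a (ract j b)) (mu c)"
    unfolding ract_def lin_sw[OF b2] by (simp add: lin_scale[OF b2] mult.commute)
  finally show ?thesis .
qed

lemma comult_eval_ract:
  assumes j: "j \<in> gens"
  shows "multilinear_form sC (Suc m) Psi \<Longrightarrow>
    comult_eval mu m (ract j c) Psi = comult_eval mu m c (\<lambda>l. Psi (butlast l @ [ract j (last l)]))"
proof (induct m arbitrary: c Psi)
  case 0
  then show ?case by simp
next
  case (Suc m)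
  have "comult_eval mu (Suc m) (ract j c) Psi = sw (\<lambda>a b. comult_eval mu m b (\<lambda>l. Psi (a # l))) (mu (ract j c))"
    by (rule comult_eval_Suc)
  also have "\<dots> = sw (\<lambda>a b. comult_eval mu m (ract j b) (\<lambda>l. Psi (a # l))) (mu c)"
  proof (rule comult_ract[OF j])
    fix y show "lin (\<lambda>x. comult_eval mu m y (\<lambda>l. Psi (x # l)))" by (rule linear_comult_eval_head[OF Suc.prems])
  next
    fix x show "lin (\<lambda>y. comult_eval mu m y (\<lambda>l. Psi (x # l)))" by (rule linear_comult_eval[OF multilinear_form_tail[OF Suc.prems]])
  qed
  also have "\<dots> = sw (\<lambda>a b. comult_eval mu m b (\<lambda>l. Psi (a # (butlast l @ [ract j (last l)])))) (mu c)"
    using Suc.hyps[OF multilinear_form_tail[OF Suc.prems]] by simp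
  also have "\<dots> = sw (\<lambda>a b. comult_eval mu m b (\<lambda>l. Psi (butlast (a # l) @ [ract j (last (a # l))]))) (mu c)"
    by (rule sw_cong, rule comult_eval_cong) (simp add: iter_comult_nonempty)
  also have "\<dots> = comult_eval mu (Suc m) c (\<lambda>l. Psi (butlast l @ [ract j (last l)]))"
    by (rule comult_eval_Suc[symmetric])
  finally show ?case .
qed

end

context finite_H1_lifts
begin

lemma comult_eval_lift_last_eq_0:
  assumes j: "j \<in> gens" and Phi: "multilinear_form sC (Suc n) Phi" and c: "ract j c = 0"
  shows "comult_eval mu n c (\<lambda>l. Phi (butlast l @ [j]) * lift j (last l)) = 0"
proof -
  define Psi where "Psi = (\<lambda>l. Phi (butlast l @ [j]) * eps (last l))"
  have Psi: "multilinear_form sC (Suc n) Psi"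
    unfolding Psi_def by (rule multilinear_form_last_functional[OF Phi linear_eps])
  have "comult_eval mu n c (\<lambda>l. Phi (butlast l @ [j]) * lift j (last l))
      = comult_eval mu n c (\<lambda>l. Psi (butlast l @ [ract j (last l)]))"
    by (rule comult_eval_cong) (simp add: Psi_def eps_ract[OF j])
  also have "\<dots> = comult_eval mu n (ract j c) Psi" by (rule comult_eval_ract[OF j Psi, symmetric])
  also have "\<dots> = 0" using c lin_0[OF linear_comult_eval[OF Psi]] by simp
  finally show ?thesis .
qed

lemma H1_expansion_last:
  assumes Phi: "multilinear_form sC (Suc n) Phi" "vanishes_on_line sC g (Suc n) Phi"
    and pre: "length pre = n" and y: "y \<in> H1"
  shows "Phi (pre @ [y]) = (\<Sum>j\<in>gens. Phi (pre @ [j]) * lift j y)"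
proof -
  have y_span: "y \<in> C.span H1_basis" by (rule H1_in_span_H1_basis[OF y])
  have lin_last: "lin (\<lambda>y. Phi (pre @ [y]))" using Phi(1) pre unfolding multilinear_form_iff by simp
  have basis_split: "H1_basis = insert g gens" "g \<notin> gens" unfolding gens_def using H1_basis(1) by auto
  have "Phi (pre @ sC 1 g # []) = 0"
    using Phi(2)[unfolded vanishes_on_line_iff, rule_format, of pre "[]" 1] pre by simp
  then have Phi_g: "Phi (pre @ [g]) = 0" by simp
  have "Phi (pre @ [y]) = Phi (pre @ [(\<Sum>b\<in>H1_basis. sC (coord b y) b)])"
    by (rule arg_cong[OF H1_basis_expansion[OF y_span]])
  also have "\<dots> = (\<Sum>b\<in>H1_basis. coord b y * Phi (pre @ [b]))"
    by (simp add: lin_sum[OF lin_last] lin_scale[OF lin_last])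
  also have "\<dots> = (\<Sum>b\<in>gens. coord b y * Phi (pre @ [b]))"
    using basis_split finite_gens Phi_g by simp
  also have "\<dots> = (\<Sum>j\<in>gens. Phi (pre @ [j]) * lift j y)"
    by (rule sum.cong) (auto simp: lift_on_span[OF _ y_span] mult.commute)
  finally show ?thesis .
qed

lemma plus_annihilated_pred:
  assumes pa: "plus_annihilated sC mu g (Suc n) c" and c: "\<And>j. j \<in> gens \<Longrightarrow> ract j c = 0"
  shows "plus_annihilated sC mu g n c"
  unfolding plus_annihilated_iff
proof (intro allI impI)
  fix Phi assume "multilinear_form sC (Suc n) Phi \<and> vanishes_on_line sC g (Suc n) Phi"
  then have Phi: "multilinear_form sC (Suc n) Phi" "vanishes_on_line sC g (Suc n) Phi" by auto
  define Q where "Q j l = Phi (butlast l @ [j]) * lift j (last l)" for j l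
  have "comult_eval mu n c (\<lambda>l. Phi l - (\<Sum>j\<in>gens. Q j l)) = 0"
  proof (rule comult_eval_eq_0_if_kills_H1[OF pa])
    have "multilinear_form sC (Suc n) (\<lambda>l. \<Sum>j\<in>gens. Q j l)"
      unfolding Q_def
      by (rule multilinear_form_sum[OF vector_space_C multilinear_form_last_functional[OF Phi(1) linear_lift]])
    then show "multilinear_form sC (Suc n) (\<lambda>l. Phi l - (\<Sum>j\<in>gens. Q j l))"
      by (rule multilinear_form_diff[OF Phi(1)])
  next
    fix v
    have "vanishes_on_line sC g n (\<lambda>l. Phi (l @ [v]) - (\<Sum>j\<in>gens. Phi (l @ [j]) * lift j v))"
      by (intro vanishes_on_line_diff vanishes_on_line_sum vanishes_on_line_mult_const
          vanishes_on_line_init[OF Phi(2)])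
    then show "vanishes_on_line sC g n (\<lambda>l. Phi (l @ [v]) - (\<Sum>j\<in>gens. Q j (l @ [v])))"
      by (simp add: Q_def)
  next
    fix pre :: "'c list" and y assume "length pre = n" "y \<in> H1"
    then show "Phi (pre @ [y]) - (\<Sum>j\<in>gens. Q j (pre @ [y])) = 0"
      using H1_expansion_last[OF Phi] by (simp add: Q_def)
  qed
  moreover have "comult_eval mu n c (Q j) = 0" if "j \<in> gens" for j
    unfolding Q_def by (rule comult_eval_lift_last_eq_0[OF that Phi(1) c[OF that]])
  ultimately show "comult_eval mu n c Phi = 0"
    by (simp add: comult_eval_diff comult_eval_sum)
qed

lemma ract_kernel:
  assumes t0: "\<And>j. j \<in> gens \<Longrightarrow> ract j c = 0"
  shows "c \<in> C.span {g}"
proof -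
  obtain n where "plus_annihilated sC mu g n c" using conil by blast
  then show ?thesis
  proof (induct n)
    case 0
    then show ?case by (rule plus_annihilated_0)
  next
    case (Suc n)
    then show ?case using plus_annihilated_pred[OF _ t0] by blast
  qed
qed

end

context finite_H1_lifts
begin

definition ract_all :: "'c \<Rightarrow> ('c \<Rightarrow> 'c)" where "ract_all c = (\<lambda>j. if j \<in> gens then ract j c else 0)"

lemma linear_ract_all: "Vector_Spaces.linear sC (pointwise_scale sC) ract_all"
proof (rule linI[OF vector_space_C vector_space_pointwise_scale[OF vector_space_C]])
  fix c c'
  show "ract_all (c + c') = ract_all c + ract_all c'"
    by (auto simp: ract_all_def fun_eq_iff plus_fun_def lin_add[OF linear_ract])
next
  fix a c
  show "ract_all (sC a c) = pointwise_scale sC a (ract_all c)"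
    by (auto simp: ract_all_def pointwise_scale_def fun_eq_iff lin_scale[OF linear_ract])
qed

lemma ract_all_coaug: "ract_all g = 0"
  by (auto simp: ract_all_def fun_eq_iff ract_coaug)

definition complement :: "'c set" where "complement = C.span (basis - {g})"

lemma coaug_notin_complement: "g \<notin> complement"
proof
  assume "g \<in> complement"
  then have "C.dependent basis" unfolding complement_def C.dependent_def using basis(1) H1_basis(1) by blast
  then show False using basis(2) by simp
qed

lemma inj_on_ract_all: "inj_on ract_all complement"
proof (rule inj_onI)
  fix u v assume u: "u \<in> complement" and v: "v \<in> complement" and e: "ract_all u = ract_all v"
  define d where "d = u - v"
  have dV: "d \<in> complement" unfolding d_def complement_def using u v unfolding complement_def by (rule C.span_diff)
  have "ract_all d = 0" unfolding d_def using e lin_diff[OF linear_ract_all] by simp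
  then have "\<And>j. j \<in> gens \<Longrightarrow> ract j d = 0"
  proof -
    fix j assume j: "j \<in> gens"
    have "ract_all d j = 0" using \<open>ract_all d = 0\<close> by simp
    then show "ract j d = 0" using j by (simp add: ract_all_def)
  qed
  then have "d \<in> C.span {g}" by (rule ract_kernel)
  then obtain k where k: "d = sC k g" unfolding C.span_singleton by blast
  have "k = 0"
  proof (rule ccontr)
    assume "k \<noteq> 0"
    then have "g = sC (inverse k) d" using k by simp
    moreover have "sC (inverse k) d \<in> complement" using dV unfolding complement_def by (rule C.span_scale)
    ultimately have "g \<in> complement" by simp
    then show False using coaug_notin_complement by simp
  qed
  then show "u = v" using k by (simp add: d_def)
qed

lemma ract_all_left_inverse:
  obtains sig where "Vector_Spaces.linear (pointwise_scale sC) sC sig"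
    "\<And>c. c - sig (ract_all c) \<in> C.span {g}"
proof -
  interpret pr: vector_space_pair sC "pointwise_scale sC"
    by (intro vector_space_pair.intro vector_space_C vector_space_pointwise_scale)
  have "C.subspace complement" unfolding complement_def by simp
  then obtain sig where sig: "Vector_Spaces.linear (pointwise_scale sC) sC sig"
    "\<And>v. v \<in> complement \<Longrightarrow> sig (ract_all v) = v"
    using pr.linear_exists_left_inverse_on[OF linear_ract_all _ inj_on_ract_all] by blast
  have "c - sig (ract_all c) \<in> C.span {g}" for c
  proof -
    have "insert g (basis - {g}) = basis" using basis(1) H1_basis(1) by auto
    then have "c \<in> C.span (insert g (basis - {g}))" using basis(3) by simp
    then obtain k where k: "c - sC k g \<in> complement" unfolding C.span_insert complement_def by blast
    have "ract_all (c - sC k g) = ract_all c"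
      using ract_all_coaug by (simp add: lin_diff[OF linear_ract_all] lin_scale[OF linear_ract_all]
          pointwise_scale_def zero_fun_def)
    then have "sig (ract_all c) = c - sC k g" using sig(2)[OF k] by simp
    then show ?thesis by (simp add: C.span_base C.span_scale)
  qed
  with sig(1) show thesis by (rule that)
qed

lemma vanishing_map_decomposition:
  fixes sV :: "'k \<Rightarrow> 'v::ab_group_add \<Rightarrow> 'v"
  assumes vs: "vector_space sV" and h: "Vector_Spaces.linear sC sV h" and hg: "h g = 0"
  obtains hj where "\<And>j. j \<in> gens \<Longrightarrow> Vector_Spaces.linear sC sV (hj j)"
    "\<And>c. h c = (\<Sum>j\<in>gens. sw (\<lambda>a b. sV (lift j b) (hj j a)) (mu c))"
proof -
  interpret V: vector_space sV by (rule vs)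
  obtain sig where sig: "Vector_Spaces.linear (pointwise_scale sC) sC sig"
    "\<And>c. c - sig (ract_all c) \<in> C.span {g}"
    by (rule ract_all_left_inverse) blast
  define unit_vec :: "'c \<Rightarrow> 'c \<Rightarrow> 'c \<Rightarrow> 'c" where "unit_vec j y = (\<lambda>i. if i = j then y else 0)" for j y
  have unit_vec_lin: "Vector_Spaces.linear sC (pointwise_scale sC) (unit_vec j)" for j
    by (rule linI[OF vector_space_C vector_space_pointwise_scale[OF vector_space_C]])
      (auto simp: unit_vec_def pointwise_scale_def fun_eq_iff)
  define hj where "hj j y = h (sig (unit_vec j y))" for j y
  have h_sig: "Vector_Spaces.linear (pointwise_scale sC) sV (\<lambda>v. h (sig v))" by (rule lin_comp[OF sig(1) h])
  have hj_lin: "Vector_Spaces.linear sC sV (hj j)" for j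
    unfolding hj_def by (rule lin_comp[OF unit_vec_lin h_sig])
  have "h c = (\<Sum>j\<in>gens. sw (\<lambda>a b. sV (lift j b) (hj j a)) (mu c))" for c
  proof -
    obtain k where k: "c - sig (ract_all c) = sC k g" using sig(2)[of c] C.span_singleton by blast
    have "h c - h (sig (ract_all c)) = 0"
      using arg_cong[OF k, of h] by (simp add: lin_diff[OF h] lin_scale[OF h] hg)
    then have "h c = h (sig (ract_all c))" by simp
    also have "ract_all c = (\<Sum>j\<in>gens. unit_vec j (ract j c))"
      using finite_gens by (simp add: fun_eq_iff sum_fun_apply unit_vec_def ract_all_def)
    also have "h (sig (\<Sum>j\<in>gens. unit_vec j (ract j c))) = (\<Sum>j\<in>gens. hj j (ract j c))"
      unfolding hj_def by (rule lin_sum[OF h_sig])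
    also have "\<dots> = (\<Sum>j\<in>gens. sw (\<lambda>a b. sV (lift j b) (hj j a)) (mu c))"
      by (simp add: ract_def lin_sw[OF hj_lin] lin_scale[OF hj_lin])
    finally show ?thesis .
  qed
  with hj_lin show thesis by (rule that)
qed

lemma map_decomposition:
  fixes sV :: "'k \<Rightarrow> 'v::ab_group_add \<Rightarrow> 'v"
  assumes vs: "vector_space sV" and h: "Vector_Spaces.linear sC sV h"
  obtains hj where "\<And>j. j \<in> gens \<Longrightarrow> Vector_Spaces.linear sC sV (hj j)"
    "\<And>c. h c = sV (eps c) (h g) + (\<Sum>j\<in>gens. sw (\<lambda>a b. sV (lift j b) (hj j a)) (mu c))"
proof -
  define h' where "h' c = h c - sV (eps c) (h g)" for c
  have h'_lin: "Vector_Spaces.linear sC sV h'"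
    unfolding h'_def by (rule lin_diff_fun[OF h lin_scale_const[OF linear_eps vs]])
  have "h' g = 0"
    using module.scale_one[OF vs[unfolded module_iff_vector_space[symmetric]]] by (simp add: h'_def eps_coaug)
  then obtain hj where hj: "\<And>j. j \<in> gens \<Longrightarrow> Vector_Spaces.linear sC sV (hj j)"
    "\<And>c. h' c = (\<Sum>j\<in>gens. sw (\<lambda>a b. sV (lift j b) (hj j a)) (mu c))"
    by (rule vanishing_map_decomposition[OF vs h'_lin]) blast
  show thesis
  proof (rule that[OF hj(1)])
    show "h c = sV (eps c) (h g) + (\<Sum>j\<in>gens. sw (\<lambda>a b. sV (lift j b) (hj j a)) (mu c))" for c
      using hj(2)[of c] unfolding h'_def by (metis add.commute diff_add_cancel)
  qed
qed

end

context finite_H1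
begin

lemma dense_subring_lifts:
  assumes "dense_subring sC mu eps R"
  obtains lift where "finite_H1_lifts sC mu eps g S0 lift" "\<And>j. lift j \<in> R"
proof -
  have "\<forall>j. \<exists>r\<in>R. \<forall>y\<in>C.span H1_basis. r y = coord j y"
    using assms linear_coord finite_H1_basis by (auto simp: dense_subring_def dual_def)
  then obtain lift where lift: "\<And>j. lift j \<in> R" "\<And>j y. y \<in> C.span H1_basis \<Longrightarrow> lift j y = coord j y"
    by metis
  moreover have "lin (lift j)" for j
    using assms lift(1) by (auto simp: dense_subring_def dual_def)
  ultimately show thesis
    by (intro that[of lift]) (simp_all add: finite_H1_lifts_def finite_H1_lifts_axioms_def finite_H1_axioms)
qed

end

section \<open>Full faithfulness of the forgetful functors\<close>

locale dense_R_hom = finite_H1_lifts sC mu eps g S0 lift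
  + P: contra sC mu eps sP piP + Q: contra sC mu eps sQ piQ
  for sC :: "'k::field \<Rightarrow> 'c::ab_group_add \<Rightarrow> 'c" and mu eps g S0 lift
    and sP :: "'k \<Rightarrow> 'p::ab_group_add \<Rightarrow> 'p" and piP
    and sQ :: "'k \<Rightarrow> 'q::ab_group_add \<Rightarrow> 'q" and piQ +
  fixes R :: "('c \<Rightarrow> 'k) set" and f :: "'p \<Rightarrow> 'q"
  assumes R_dual: "R \<subseteq> dual sC" and lift_in_R: "\<And>j. j \<in> gens \<Longrightarrow> lift j \<in> R"
    and R_dense_at_coaug: "\<And>\<xi>. lin \<xi> \<Longrightarrow> \<exists>r\<in>R. r g = \<xi> g"
    and hom: "R_module_hom R sP piP sQ piQ f"
begin

sublocale Q_conil: conilpotent_contramodule sC mu eps sQ piQ g gens lift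
  by (intro conilpotent_contramodule.intro Q.contra_axioms coaug_axioms
      conilpotent_contramodule_axioms.intro finite_gens linear_lift lift_coaug conil)

lemma hom_add: "f (p + p') = f p + f p'"
  using hom by (simp add: R_module_hom_def)

lemma hom_act_R: "r \<in> R \<Longrightarrow> f (P.act r p) = Q.act r (f p)"
  using hom by (simp add: R_module_hom_def)

lemma hom_sum: "f (\<Sum>i\<in>I. v i) = (\<Sum>i\<in>I. f (v i))"
  by (induct I rule: infinite_finite_induct) (auto simp: additive_0[OF hom_add] hom_add)

lemma dual_decomposition:
  assumes "lin \<xi>"
  obtains r z where "r \<in> R" "\<And>j. j \<in> gens \<Longrightarrow> lin (z j)"
    "\<And>c. \<xi> c = r c + (\<Sum>j\<in>gens. sw (\<lambda>a b. lift j b * z j a) (mu c))"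
proof -
  obtain r where r: "r \<in> R" "r g = \<xi> g" using R_dense_at_coaug[OF assms] by blast
  have "lin r" using r(1) R_dual by (auto simp: dual_def)
  then have "lin (\<lambda>c. \<xi> c - r c)" by (rule lin_diff_fun[OF assms])
  moreover have "\<xi> g - r g = 0" using r(2) by simp
  ultimately obtain z where z: "\<And>j. j \<in> gens \<Longrightarrow> lin (z j)"
    "\<And>c. \<xi> c - r c = (\<Sum>j\<in>gens. sw (\<lambda>a b. lift j b * z j a) (mu c))"
    by (rule vanishing_map_decomposition[OF field_vector_space]) blast
  show thesis
  proof (rule that[OF r(1) z(1)])
    show "\<xi> c = r c + (\<Sum>j\<in>gens. sw (\<lambda>a b. lift j b * z j a) (mu c))" for c
      using z(2)[of c] by (metis add.commute diff_add_cancel)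
  qed
qed

lemma hom_act:
  assumes "lin \<xi>"
  shows "f (P.act \<xi> p) = Q.act \<xi> (f p)"
proof -
  define D where "D \<xi> = (if lin \<xi> then f (P.act \<xi> p) - Q.act \<xi> (f p) else 0)" for \<xi>
  have "D \<xi> = 0"
  proof (rule Q_conil.contramodule_nakayama[where D = D])
    fix \<xi> :: "'c \<Rightarrow> 'k"
    show "\<exists>\<eta>. D \<xi> = (\<Sum>j\<in>gens. Q.act (lift j) (D (\<eta> j)))"
    proof (cases "lin \<xi>")
      case False
      then show ?thesis by (intro exI[of _ "\<lambda>j. \<xi>"]) (simp add: D_def Q.act_0 linear_lift)
    next
      case True
      then obtain r z where r: "r \<in> R" and z: "\<And>j. j \<in> gens \<Longrightarrow> lin (z j)"
        and \<xi>_eq: "\<xi> = (\<lambda>c. r c + (\<Sum>j\<in>gens. sw (\<lambda>a b. lift j b * z j a) (mu c)))"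
        by (rule dual_decomposition) blast
      have r_lin: "lin r" using r R_dual by (auto simp: dual_def)
      have "D \<xi> = f (P.act r p + (\<Sum>j\<in>gens. P.act (lift j) (P.act (z j) p)))
          - (Q.act r (f p) + (\<Sum>j\<in>gens. Q.act (lift j) (Q.act (z j) (f p))))"
        using True unfolding D_def \<xi>_eq
        by (simp only: if_True P.act_decomposed[OF r_lin linear_lift z]
            Q.act_decomposed[OF r_lin linear_lift z])
      also have "\<dots> = (\<Sum>j\<in>gens. Q.act (lift j) (f (P.act (z j) p)))
          - (\<Sum>j\<in>gens. Q.act (lift j) (Q.act (z j) (f p)))"
        by (simp add: hom_add hom_sum hom_act_R r lift_in_R)
      also have "\<dots> = (\<Sum>j\<in>gens. Q.act (lift j) (D (z j)))"
        by (simp add: D_def z Q.act_diff linear_lift flip: sum_subtractf)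
      finally show ?thesis by blast
    qed
  qed
  then show ?thesis using assms by (simp add: D_def)
qed

lemma linear_hom: "Vector_Spaces.linear sP sQ f"
proof (rule linI[OF P.vector_space_P Q.vector_space_P hom_add])
  fix a p
  have "f (sP a p) = f (P.act (\<lambda>c. a * eps c) p)" by (simp add: P.act_scalar)
  also have "\<dots> = Q.act (\<lambda>c. a * eps c) (f p)" by (rule hom_act[OF lin_mult_left[OF linear_eps]])
  finally show "f (sP a p) = sQ a (f p)" by (simp add: Q.act_scalar)
qed

lemma hom_pi:
  assumes "P.linP h"
  shows "f (piP h) = piQ (\<lambda>c. f (h c))"
proof -
  define D where "D h = (if P.linP h then f (piP h) - piQ (\<lambda>c. f (h c)) else 0)" for h
  have "D h = 0"
  proof (rule Q_conil.contramodule_nakayama[where D = D])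
    fix h :: "'c \<Rightarrow> 'p"
    show "\<exists>\<eta>. D h = (\<Sum>j\<in>gens. Q.act (lift j) (D (\<eta> j)))"
    proof (cases "P.linP h")
      case False
      then show ?thesis by (intro exI[of _ "\<lambda>j. h"]) (simp add: D_def Q.act_0 linear_lift)
    next
      case True
      then obtain hj where hj: "\<And>j. j \<in> gens \<Longrightarrow> P.linP (hj j)"
        and h_eq: "\<And>c. h c = sP (eps c) (h g) + (\<Sum>j\<in>gens. sw (\<lambda>a b. sP (lift j b) (hj j a)) (mu c))"
        by (rule map_decomposition[OF P.vector_space_P]) blast
      have fhj: "Q.linP (\<lambda>c. f (hj j c))" if "j \<in> gens" for j
        by (rule lin_comp[OF hj[OF that] linear_hom])
      have fh_eq: "(\<lambda>c. f (h c)) = (\<lambda>c. sQ (eps c) (f (h g))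
          + (\<Sum>j\<in>gens. sw (\<lambda>a b. sQ (lift j b) (f (hj j a))) (mu c)))"
        by (subst h_eq) (simp add: fun_eq_iff lin_add[OF linear_hom] lin_sum[OF linear_hom]
            lin_sw[OF linear_hom] lin_scale[OF linear_hom])
      have "piP h = h g + (\<Sum>j\<in>gens. P.act (lift j) (piP (hj j)))"
        by (subst h_eq[abs_def]) (rule P.pi_decomposed[OF linear_lift hj])
      moreover have "piQ (\<lambda>c. f (h c)) = f (h g) + (\<Sum>j\<in>gens. Q.act (lift j) (piQ (\<lambda>c. f (hj j c))))"
        unfolding fh_eq by (rule Q.pi_decomposed[OF linear_lift fhj])
      ultimately have "D h = (\<Sum>j\<in>gens. Q.act (lift j) (f (piP (hj j))))
          - (\<Sum>j\<in>gens. Q.act (lift j) (piQ (\<lambda>c. f (hj j c))))"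
        using True by (simp add: D_def hom_add hom_sum hom_act_R lift_in_R)
      also have "\<dots> = (\<Sum>j\<in>gens. Q.act (lift j) (D (hj j)))"
        by (simp add: D_def hj Q.act_diff linear_lift flip: sum_subtractf)
      finally show ?thesis by blast
    qed
  qed
  then show ?thesis using assms by (simp add: D_def)
qed

lemma contra_hom: "contra_hom sC sP piP sQ piQ f"
  by (simp add: contra_hom_def linear_hom hom_pi comp_def)

end

lemma dense_subring_dual:
  assumes "coalgebra sC mu eps"
  shows "dense_subring sC mu eps (dual sC)"
proof -
  interpret coalg sC mu eps by unfold_locales (rule assms)
  have "(\<lambda>c. r c - s c) \<in> dual sC" "dual_mult mu r s \<in> dual sC" if "r \<in> dual sC" "s \<in> dual sC" for r s
    using that lin_diff_fun linear_comult[OF lin_mult_right lin_mult_left]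
    by (auto simp: dual_def dual_mult_def)
  then show ?thesis
    unfolding dense_subring_def using linear_eps by (auto simp: dual_def)
qed

lemma contra_hom_iff_R_module_hom:
  fixes sC :: "'k::field \<Rightarrow> 'c::ab_group_add \<Rightarrow> 'c"
    and sP :: "'k \<Rightarrow> 'p::ab_group_add \<Rightarrow> 'p" and sQ :: "'k \<Rightarrow> 'q::ab_group_add \<Rightarrow> 'q"
  assumes C: "coalgebra sC mu eps" "conilpotent_wrt sC mu eps g" "H1_finite_dim sC mu g"
    and P: "contramodule sC mu eps sP piP" and Q: "contramodule sC mu eps sQ piQ"
    and R: "dense_subring sC mu eps R"
  shows "contra_hom sC sP piP sQ piQ f \<longleftrightarrow> R_module_hom R sP piP sQ piQ f"
proof -
  interpret coaug sC mu eps g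
    using C(1,2) by (simp add: coaug_def coalg_def coaug_axioms_def conilpotent_wrt_def)
  obtain S0 where "finite S0" "\<And>y. plus_annihilated sC mu g 1 y \<Longrightarrow> y \<in> C.span (insert g S0)"
    using C(3) unfolding H1_finite_dim_def by blast
  then interpret finite_H1 sC mu eps g S0
    using C(2) by unfold_locales (auto simp: conilpotent_wrt_def)
  show ?thesis
  proof
    show "contra_hom sC sP piP sQ piQ f \<Longrightarrow> R_module_hom R sP piP sQ piQ f"
      using R by (intro contra_hom_imp_R_module_hom[OF P]) (auto simp: dense_subring_def)
  next
    assume hom: "R_module_hom R sP piP sQ piQ f"
    obtain lift where "finite_H1_lifts sC mu eps g S0 lift" "\<And>j. lift j \<in> R"
      by (rule dense_subring_lifts[OF R]) blast
    moreover have "\<exists>r\<in>R. r g = \<xi> g" if "lin \<xi>" for \<xi>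
      using R that C.span_base[of g "{g}"] unfolding dense_subring_def dual_def by blast
    ultimately interpret dense_R_hom sC mu eps g S0 lift sP piP sQ piQ R f
      using C(1) P Q R hom
      by (simp add: dense_R_hom_def dense_R_hom_axioms_def contra_def contra_axioms_def coalg_def
          dense_subring_def)
    show "contra_hom sC sP piP sQ piQ f" by (rule contra_hom)
  qed
qed

theorem theorem1p1:
  fixes sC :: "'k::field \<Rightarrow> 'c::ab_group_add \<Rightarrow> 'c"
    and mu :: "'c \<Rightarrow> ('c \<times> 'c) list" and eps :: "'c \<Rightarrow> 'k" and g :: 'c
    and sP :: "'k \<Rightarrow> 'p::ab_group_add \<Rightarrow> 'p" and piP :: "('c \<Rightarrow> 'p) \<Rightarrow> 'p"
    and sQ :: "'k \<Rightarrow> 'q::ab_group_add \<Rightarrow> 'q" and piQ :: "('c \<Rightarrow> 'q) \<Rightarrow> 'q"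
  assumes "coalgebra sC mu eps"
    and "conilpotent_wrt sC mu eps g"
    and "H1_finite_dim sC mu g"
    and "contramodule sC mu eps sP piP"
    and "contramodule sC mu eps sQ piQ"
  shows "(\<forall>f. contra_hom sC sP piP sQ piQ f \<longleftrightarrow> R_module_hom (dual sC) sP piP sQ piQ f)
    \<and> (\<forall>R. dense_subring sC mu eps R \<longrightarrow>
         (\<forall>f. contra_hom sC sP piP sQ piQ f \<longleftrightarrow> R_module_hom R sP piP sQ piQ f))"
  using contra_hom_iff_R_module_hom[OF assms] dense_subring_dual[OF assms(1)] by blast

end
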